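(* Let $X$ be a metric graph with its usual length distance $d$ and one-dimensional Hausdorff measure $\mathcal{H}^1$, and suppose $(X,d,\mathcal{H}^1)$ satisfies $\mathrm{BG}(k,n)$ with constant $C$ for some $k\in\mathbb{R}$, $n\ge1$, $C\ge1$. Then $\deg(x)\le C+1$ for all $x\in X$.
   Context: A metric measure space $(X,d,\mu)$ means a complete, locally compact length space $(X,d)$ equipped with a Borel measure $\mu$. $B_r(x)$ and $\overline B_r(x)$ denote the open and closed balls of radius $r$ about $x$. For $k\in\mathbb{R}$ let $\mathsf s_k(t)=\sin(\sqrt{k}\,t)/\sqrt{k}$ if $k>0$, $\mathsf s_k(t)=t$ if $k=0$, $\mathsf s_k(t)=\sinh(\sqrt{-k}\,t)/\sqrt{-k}$ if $k<0$. For real $n\ge1$ and $0\le r_1<r_2$ set $V_{k,n}(r_1,r_2)=\alpha_{n-1}\int_{r_1}^{r_2}\mathsf s_k(t)^{n-1}\,dt$ with $\alpha_{n-1}=2\pi^{n/2}/\Gamma(n/2)$. For $x\in X$ let $A_{r_1,r_2}(x)=B_{r_2}(x)\setminus\overline B_{r_1}(x)$ and $A_{0,r}(x)=B_r(x)$. For a measurable $U\subset A_{r_1,r_2}(x)$ and $0\le s_1<s_2$ with $s_1\le r_1$, $s_2\le r_2$, let $S_{s_1,s_2}(x,U)=\{y\in A_{s_1,s_2}(x): d(x,y)+d(y,z)=d(x,z)\text{ for some }z\in U\}$. $(X,d,\mu)$ satisfies $\mathrm{BG}(k,n)$ with constant $C\ge1$ if for every $x\in X$, all $0\le r_1<r_2$,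 $0\le s_1<s_2$ with $s_1\le r_1$, $s_2\le r_2$, and every measurable $U\subset A_{r_1,r_2}(x)$, one has $\mu(U)/\mu(S_{s_1,s_2}(x,U))\le C\,V_{k,n}(r_1,r_2)/V_{k,n}(s_1,s_2)$. The degree $\deg(x)$ is the supremum, over all connected neighborhoods $U$ of $x$, of the number of connected components of $U\setminus\{x\}$. *)

theory Defs
  imports "HOL-Analysis.Analysis"
begin

definition curve_length :: "(real \<Rightarrow> 'a::metric_space) \<Rightarrow> real \<Rightarrow> real \<Rightarrow> ennreal" where
  "curve_length g a b =
     (SUP ts \<in> {ts. sorted_wrt (<) ts \<and> ts \<noteq> [] \<and> hd ts = a \<and> last ts = b}.
        ennreal (\<Sum>i<length ts - 1. dist (g (ts ! i)) (g (ts ! (i + 1)))))"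

definition length_space :: "'a::metric_space itself \<Rightarrow> bool" where
  "length_space _ \<longleftrightarrow>
     (\<forall>x y::'a. ennreal (dist x y) =
        (INF g \<in> {g. continuous_on {0..1} g \<and> g 0 = x \<and> g 1 = y}. curve_length g 0 1))"

definition loc_compact_metric :: "'a::metric_space itself \<Rightarrow> bool" where
  "loc_compact_metric _ \<longleftrightarrow> (\<forall>x::'a. \<exists>U. open U \<and> x \<in> U \<and> compact (closure U))"

text \<open>Together with the length-space assumption this
  says that d is the usual length distance of the graph.\<close>
definition metric_graph :: "'a::metric_space set \<Rightarrow> nat set \<Rightarrow> (nat \<Rightarrow> real) \<Rightarrow> (nat \<Rightarrow> real \<Rightarrow> 'a) \<Rightarrow> bool" where
  "metric_graph V E l gamma \<longleftrightarrow>
     (\<forall>e\<in>E. 0 < l e \<and> continuous_on {0..l e} (gamma e) \<and> inj_on (gamma e) {0<..<l e}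
        \<and> gamma e 0 \<in> V \<and> gamma e (l e) \<in> V
        \<and> (\<forall>a b. 0 \<le> a \<longrightarrow> a \<le> b \<longrightarrow> b \<le> l e \<longrightarrow> curve_length (gamma e) a b = ennreal (b - a))
        \<and> gamma e ` {0<..<l e} \<inter> V = {})
   \<and> (\<forall>e\<in>E. \<forall>e'\<in>E. e \<noteq> e' \<longrightarrow> gamma e ` {0<..<l e} \<inter> gamma e' ` {0<..<l e'} = {})
   \<and> UNIV = V \<union> (\<Union>e\<in>E. gamma e ` {0..l e})
   \<and> (\<forall>x. \<exists>U. open U \<and> x \<in> U \<and> finite (V \<inter> U)
              \<and> finite {e\<in>E. gamma e ` {0..l e} \<inter> U \<noteq> {}})"

definition hausdorff1_pre :: "real \<Rightarrow> 'a::metric_space set \<Rightarrow> ennreal" where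
  "hausdorff1_pre \<delta> A =
     (INF D \<in> {D :: nat \<Rightarrow> 'a set. A \<subseteq> (\<Union>i. D i) \<and> (\<forall>i. bounded (D i) \<and> diameter (D i) \<le> \<delta>)}.
        (\<Sum>i. ennreal (diameter (D i))))"

definition hausdorff1 :: "'a::metric_space set \<Rightarrow> ennreal" where
  "hausdorff1 A = (SUP \<delta> \<in> {0<..}. hausdorff1_pre \<delta> A)"

definition sk :: "real \<Rightarrow> real \<Rightarrow> real" where
  "sk k t = (if k > 0 then sin (sqrt k * t) / sqrt k
             else if k = 0 then t
             else sinh (sqrt (- k) * t) / sqrt (- k))"

definition alpha_const :: "real \<Rightarrow> real" where
  "alpha_const m = 2 * pi powr ((m + 1) / 2) / Gamma ((m + 1) / 2)"

definition Vkn :: "real \<Rightarrow> real \<Rightarrow> real \<Rightarrow> real \<Rightarrow> real" where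
  "Vkn k n r1 r2 = alpha_const (n - 1) * integral {r1..r2} (\<lambda>t. sk k t powr (n - 1))"

definition annulus :: "'a::metric_space \<Rightarrow> real \<Rightarrow> real \<Rightarrow> 'a set" where
  "annulus x r1 r2 = (if r1 = 0 then ball x r2 else ball x r2 - cball x r1)"

definition Sset :: "real \<Rightarrow> real \<Rightarrow> 'a::metric_space \<Rightarrow> 'a set \<Rightarrow> 'a set" where
  "Sset s1 s2 x U = {y \<in> annulus x s1 s2. \<exists>z\<in>U. dist x y + dist y z = dist x z}"

definition BG :: "'a::metric_space itself \<Rightarrow> real \<Rightarrow> real \<Rightarrow> real \<Rightarrow> bool" where
  "BG _ k n C \<longleftrightarrow>
     (\<forall>(x::'a) r1 r2 s1 s2 U. 0 \<le> r1 \<longrightarrow> r1 < r2 \<longrightarrow> 0 \<le> s1 \<longrightarrow> s1 < s2 \<longrightarrow> s1 \<le> r1 \<longrightarrow> s2 \<le> r2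
        \<longrightarrow> U \<in> sets borel \<longrightarrow> U \<subseteq> annulus x r1 r2
        \<longrightarrow> hausdorff1 U / hausdorff1 (Sset s1 s2 x U)
              \<le> ennreal C * ennreal (Vkn k n r1 r2) / ennreal (Vkn k n s1 s2))"

definition num_components :: "'a::topological_space set \<Rightarrow> ereal" where
  "num_components S = (if finite (components S) then ereal (real (card (components S))) else \<infinity>)"

definition deg :: "'a::topological_space \<Rightarrow> ereal" where
  "deg x = (SUP U \<in> {U. connected U \<and> x \<in> interior U}. num_components (U - {x}))"

end

theory Submission
  imports Defs
begin

text \<open>Near a point \<open>x\<close> a metric graph is a star: a small ball about \<open>x\<close> is the union of
  initial segments of the finitely many germs of edges at \<open>x\<close>, and since \<open>d\<close> is the length
  distance, two points on different segments are joined only through \<open>x\<close>. Each component of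
  \<open>U - {x}\<close>, for connected \<open>U\<close> with \<open>x\<close> in its interior, contains one of these segments, so
  \<open>deg x\<close> is at most the number \<open>m\<close> of germs.

  To get \<open>m \<le> C + 1\<close>, put the centre \<open>c\<close> at distance \<open>\<epsilon>\<close> from \<open>x\<close> on one germ and let \<open>U\<close> be
  the union of the segments of length \<open>\<rho>\<close> on the other \<open>m - 1\<close> germs. Then \<open>U\<close> lies in the
  annulus of radii \<open>\<epsilon>, \<epsilon> + \<rho>\<close> about \<open>c\<close> and has measure almost \<open>(m - 1) \<rho>\<close>, while all
  geodesics from \<open>c\<close> to \<open>U\<close> pass through \<open>x\<close>, so their part in the annulus of radii
  \<open>\<epsilon> - \<rho>, \<epsilon>\<close> lies on a segment of length \<open>\<rho>\<close>. For small \<open>\<rho> / \<epsilon>\<close> the model ratio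
  \<open>V(\<epsilon>, \<epsilon> + \<rho>) / V(\<epsilon> - \<rho>, \<epsilon>)\<close> is close to \<open>1\<close>, and \<open>BG(k, n)\<close> forces \<open>m - 1 \<le> C\<close>.\<close>

section \<open>Curve length through partitions\<close>

fun polygon_length :: "(real \<Rightarrow> 'a::metric_space) \<Rightarrow> real list \<Rightarrow> real" where
  "polygon_length g (a # b # ts) = dist (g a) (g b) + polygon_length g (b # ts)"
| "polygon_length g _ = 0"

lemma polygon_length_nonneg: "0 \<le> polygon_length g ts"
  by (induction g ts rule: polygon_length.induct) auto

lemma polygon_length_conv_sum:
  "polygon_length g ts = (\<Sum>i<length ts - 1. dist (g (ts ! i)) (g (ts ! (i + 1))))"
proof (induction g ts rule: polygon_length.induct)
  case (1 g a b ts)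
  have "(\<Sum>i<length (a # b # ts) - 1. dist (g ((a # b # ts) ! i)) (g ((a # b # ts) ! (i + 1))))
      = dist (g a) (g b) + (\<Sum>i<length (b # ts) - 1. dist (g ((b # ts) ! i)) (g ((b # ts) ! (i + 1))))"
    by (simp add: sum.lessThan_Suc_shift del: sum.lessThan_Suc)
  then show ?case using 1 by simp
qed auto

lemma polygon_length_cong:
  "(\<And>t. t \<in> set ts \<Longrightarrow> f t = g t) \<Longrightarrow> polygon_length f ts = polygon_length g ts"
  by (induction g ts rule: polygon_length.induct) auto

lemma polygon_length_map: "polygon_length g (map f ts) = polygon_length (g \<circ> f) ts"
  by (induction "g \<circ> f" ts rule: polygon_length.induct) auto

lemma polygon_length_snoc:
  "ts \<noteq> [] \<Longrightarrow> polygon_length g (ts @ [b]) = polygon_length g ts + dist (g (last ts)) (g b)"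
  by (induction g ts rule: polygon_length.induct) auto

lemma polygon_length_rev: "polygon_length g (rev ts) = polygon_length g ts"
proof (induction g ts rule: polygon_length.induct)
  case (1 g a b ts)
  have "polygon_length g (rev (a # b # ts)) = polygon_length g (rev (b # ts) @ [a])"
    by simp
  also have "\<dots> = polygon_length g (rev (b # ts)) + dist (g b) (g a)"
    by (subst polygon_length_snoc) auto
  finally show ?case
    using 1 by (simp add: dist_commute)
qed auto

lemma polygon_length_append:
  "xs \<noteq> [] \<Longrightarrow> ys \<noteq> [] \<Longrightarrow> last xs = hd ys \<Longrightarrow>
   polygon_length g (xs @ tl ys) = polygon_length g xs + polygon_length g ys"
proof (induction xs)
  case (Cons a xs)
  then show ?case by (cases xs; cases ys) auto
qed simp

lemma polygon_length_remdups_adj: "polygon_length g (remdups_adj ts) = polygon_length g ts"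
proof (induction ts rule: remdups_adj.induct)
  case (3 a b ts)
  obtain r where "remdups_adj (b # ts) = b # r"
    using remdups_adj_Cons_alt[of b ts] by metis
  with 3 show ?case
    by (cases "a = b") auto
qed auto

lemma sorted_wrt_less_remdups_adj: "sorted (xs::'a::linorder list) \<Longrightarrow> sorted_wrt (<) (remdups_adj xs)"
proof (induction xs rule: remdups_adj.induct)
  case (3 x y xs)
  obtain r where "remdups_adj (y # xs) = y # r"
    using remdups_adj_Cons_alt[of y xs] by metis
  with 3 show ?case
    by (cases "x = y") (auto intro: less_le_trans)
qed auto

definition partitions :: "real \<Rightarrow> real \<Rightarrow> real list set" where
  "partitions a b = {ts. sorted_wrt (<) ts \<and> ts \<noteq> [] \<and> hd ts = a \<and> last ts = b}"

lemma curve_length_eq_SUP_partitions: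
  "curve_length g a b = (SUP ts\<in>partitions a b. ennreal (polygon_length g ts))"
  unfolding curve_length_def partitions_def polygon_length_conv_sum ..

lemma partitions_subset_interval:
  assumes "ts \<in> partitions a b"
  shows "set ts \<subseteq> {a..b}"
proof
  fix t assume "t \<in> set ts"
  then obtain i where i: "i < length ts" "t = ts ! i"
    by (auto simp: in_set_conv_nth)
  have ts: "sorted ts" "ts \<noteq> []" "ts ! 0 = a" "ts ! (length ts - 1) = b"
    using assms unfolding partitions_def by (auto simp: strict_sorted_iff hd_conv_nth last_conv_nth)
  then show "t \<in> {a..b}"
    using i sorted_nth_mono[OF ts(1), of 0 i] sorted_nth_mono[OF ts(1), of i "length ts - 1"] by auto
qed

lemma partitions_nonempty:
  assumes "a \<le> b"
  shows "partitions a b \<noteq> {}"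
proof (cases "a = b")
  case True
  then have "[a] \<in> partitions a b" by (simp add: partitions_def)
  then show ?thesis by blast
next
  case False
  then have "[a, b] \<in> partitions a b" using assms by (simp add: partitions_def)
  then show ?thesis by blast
qed

lemma polygon_length_le_curve_length:
  assumes "sorted ts" "ts \<noteq> []" "hd ts = a" "last ts = b"
  shows "ennreal (polygon_length g ts) \<le> curve_length g a b"
proof -
  have "remdups_adj ts \<in> partitions a b"
    using assms sorted_wrt_less_remdups_adj unfolding partitions_def by auto
  then have "ennreal (polygon_length g (remdups_adj ts))
      \<le> (SUP ts\<in>partitions a b. ennreal (polygon_length g ts))"
    by (rule SUP_upper)
  then show ?thesis
    by (simp only: curve_length_eq_SUP_partitions polygon_length_remdups_adj)
qed

lemma dist_le_curve_length: "a \<le> b \<Longrightarrow> ennreal (dist (g a) (g b)) \<le> curve_length g a b"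
  using polygon_length_le_curve_length[of "[a, b]" a b g] by simp

lemma polygon_length_append_le_curve_length:
  assumes xs: "xs \<in> partitions a b" and ys: "ys \<in> partitions b c"
  shows "ennreal (polygon_length g xs) + ennreal (polygon_length g ys) \<le> curve_length g a c"
proof -
  have xs': "sorted_wrt (<) xs" "xs \<noteq> []" "hd xs = a" "last xs = b"
    and ys': "sorted_wrt (<) ys" "ys \<noteq> []" "hd ys = b" "last ys = c"
    using xs ys unfolding partitions_def by auto
  obtain y ys0 where ys0: "ys = y # ys0"
    using ys'(2) by (cases ys) auto
  have "x \<le> y'" if "x \<in> set xs" "y' \<in> set ys0" for x y'
  proof -
    have "x \<le> b" using that(1) partitions_subset_interval[OF xs] by auto
    also have "b \<le> y'" using that(2) ys0 partitions_subset_interval[OF ys] by auto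
    finally show ?thesis .
  qed
  moreover have "sorted ys0"
    using ys'(1) ys0 by (simp add: strict_sorted_iff)
  ultimately have "sorted (xs @ tl ys)"
    using xs'(1) ys0 by (simp add: sorted_append strict_sorted_iff)
  moreover have "last (xs @ tl ys) = c"
    using xs' ys' ys0 by (cases ys0) auto
  ultimately have "ennreal (polygon_length g (xs @ tl ys)) \<le> curve_length g a c"
    using xs' by (intro polygon_length_le_curve_length) auto
  moreover have "polygon_length g (xs @ tl ys) = polygon_length g xs + polygon_length g ys"
    using xs' ys' by (intro polygon_length_append) auto
  ultimately show ?thesis
    by (simp add: polygon_length_nonneg ennreal_plus[symmetric] del: ennreal_plus)
qed

lemma curve_length_superadditive:
  assumes "a \<le> b" "b \<le> c"
  shows "curve_length g a b + curve_length g b c \<le> curve_length g a c"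
proof -
  have "curve_length g a b + curve_length g b c
      = (SUP ys\<in>partitions b c. curve_length g a b + ennreal (polygon_length g ys))"
    unfolding curve_length_eq_SUP_partitions[of g b c]
    by (rule ennreal_SUP_add_right[OF partitions_nonempty[OF assms(2)]])
  also have "\<dots> \<le> curve_length g a c"
  proof (rule SUP_least)
    fix ys assume ys: "ys \<in> partitions b c"
    have "curve_length g a b + ennreal (polygon_length g ys)
        = (SUP xs\<in>partitions a b. ennreal (polygon_length g xs) + ennreal (polygon_length g ys))"
      unfolding curve_length_eq_SUP_partitions[of g a b]
      by (rule ennreal_SUP_add_left[OF partitions_nonempty[OF assms(1)], symmetric])
    also have "\<dots> \<le> curve_length g a c"
      using ys by (intro SUP_least polygon_length_append_le_curve_length)
    finally show "curve_length g a b + ennreal (polygon_length g ys) \<le> curve_length g a c" .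
  qed
  finally show ?thesis .
qed

lemma curve_length_mono_interval:
  assumes "a \<le> b" "b \<le> c" "c \<le> d"
  shows "curve_length g b c \<le> curve_length g a d"
proof -
  have "curve_length g b c \<le> curve_length g a b + curve_length g b c"
    by simp
  also have "\<dots> \<le> curve_length g a c"
    using assms by (intro curve_length_superadditive) auto
  also have "\<dots> \<le> curve_length g a c + curve_length g c d"
    by simp
  also have "\<dots> \<le> curve_length g a d"
    using assms by (intro curve_length_superadditive) auto
  finally show ?thesis .
qed

lemma curve_length_reverse: "curve_length (\<lambda>s. g (a + b - s)) a b = curve_length g a b"
proof -
  define r where "r ts = rev (map (\<lambda>s. a + b - s) ts)" for ts
  have r_partitions: "r ts \<in> partitions a b" if "ts \<in> partitions a b" for ts
    using that unfolding partitions_def r_def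
    by (auto simp: sorted_wrt_rev sorted_wrt_map last_rev hd_rev hd_map last_map
        elim!: sorted_wrt_mono_rel[rotated])
  have r_r: "r (r ts) = ts" for ts
    unfolding r_def by (simp add: rev_map comp_def)
  have r_image: "r ` partitions a b = partitions a b"
  proof
    show "partitions a b \<subseteq> r ` partitions a b"
      using r_partitions r_r by (metis image_eqI subsetI)
  qed (use r_partitions in blast)
  have "polygon_length (\<lambda>s. g (a + b - s)) (r ts) = polygon_length g ts" for ts
    unfolding r_def polygon_length_rev polygon_length_map by (simp add: comp_def)
  then have "curve_length g a b
      = (SUP ts\<in>partitions a b. ennreal (polygon_length (\<lambda>s. g (a + b - s)) (r ts)))"
    by (simp add: curve_length_eq_SUP_partitions)
  also have "\<dots> = curve_length (\<lambda>s. g (a + b - s)) a b"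
    unfolding curve_length_eq_SUP_partitions by (subst r_image[symmetric]) (simp add: image_comp)
  finally show ?thesis ..
qed

lemma curve_length_ge_if_leaves_ball:
  fixes h :: "real \<Rightarrow> 'a::metric_space"
  assumes "a \<le> \<tau>" "\<tau> \<le> b" "dist y (h a) \<le> s" "h \<tau> \<notin> ball y r"
  shows "ennreal (r - s) \<le> curve_length h a b"
proof -
  have "r - s \<le> dist (h a) (h \<tau>)"
    using assms(3,4) dist_triangle[of y "h \<tau>" "h a"] by simp
  then have "ennreal (r - s) \<le> ennreal (dist (h a) (h \<tau>))"
    by (rule ennreal_leI)
  also have "\<dots> \<le> curve_length h a \<tau>"
    using assms(1) by (rule dist_le_curve_length)
  also have "\<dots> \<le> curve_length h a b"
    using assms(1,2) by (intro curve_length_mono_interval) auto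
  finally show ?thesis .
qed

lemma continuous_on_mono_section:
  fixes \<phi> :: "real \<Rightarrow> real"
  assumes cont: "continuous_on {c..d} \<phi>" and "c \<le> d"
  obtains \<sigma> where "mono_on {\<phi> c..\<phi> d} \<sigma>"
    and "\<And>v. v \<in> {\<phi> c..\<phi> d} \<Longrightarrow> \<sigma> v \<in> {c..d} \<and> \<phi> (\<sigma> v) = v"
proof -
  define S where "S v = {s \<in> {c..d}. v \<le> \<phi> s}" for v
  have S_bdd: "bdd_below (S v)" for v
    unfolding S_def by (rule bdd_belowI[of _ c]) auto
  have Inf_S: "Inf (S v) \<in> S v" if "v \<le> \<phi> d" for v
  proof (rule closed_contains_Inf)
    show "S v \<noteq> {}" using that \<open>c \<le> d\<close> unfolding S_def by auto
    show "closed (S v)"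
      unfolding S_def using continuous_on_closed_Collect_le[OF continuous_on_const cont] by simp
  qed (rule S_bdd)
  have hits: "Inf (S v) \<in> {c..d} \<and> \<phi> (Inf (S v)) = v" if v: "v \<in> {\<phi> c..\<phi> d}" for v
  proof -
    have hit: "c \<le> Inf (S v)" "Inf (S v) \<le> d" "v \<le> \<phi> (Inf (S v))"
      using Inf_S[of v] v unfolding S_def by auto
    then obtain s where s: "c \<le> s" "s \<le> Inf (S v)" "\<phi> s = v"
      using IVT'[of \<phi> c v "Inf (S v)"] v continuous_on_subset[OF cont] by auto
    then have "s \<in> S v"
      using hit unfolding S_def by auto
    then have "Inf (S v) \<le> s"
      by (intro cInf_lower S_bdd)
    then show ?thesis
      using s hit by auto
  qed
  have "mono_on {\<phi> c..\<phi> d} (\<lambda>v. Inf (S v))"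
  proof (rule mono_onI)
    fix v v' assume "v \<in> {\<phi> c..\<phi> d}" "v' \<in> {\<phi> c..\<phi> d}" "v \<le> v'"
    then show "Inf (S v) \<le> Inf (S v')"
      using Inf_S[of v'] by (intro cInf_superset_mono S_bdd) (auto simp: S_def)
  qed
  then show ?thesis
    using hits by (rule that)
qed

text \<open>A partition pulled back along a monotone section of \<open>\<phi>\<close> has the same polygon length.\<close>

lemma curve_length_le_reparametrization:
  fixes \<gamma> h :: "real \<Rightarrow> 'a::metric_space"
  assumes cont: "continuous_on {c..d} \<phi>" and "c \<le> d" "\<phi> c \<le> \<phi> d"
    and h: "\<And>s. s \<in> {c..d} \<Longrightarrow> h s = \<gamma> (\<phi> s)"
  shows "curve_length \<gamma> (\<phi> c) (\<phi> d) \<le> curve_length h c d"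
proof -
  obtain \<sigma> where mono: "mono_on {\<phi> c..\<phi> d} \<sigma>"
    and \<sigma>: "\<And>v. v \<in> {\<phi> c..\<phi> d} \<Longrightarrow> \<sigma> v \<in> {c..d} \<and> \<phi> (\<sigma> v) = v"
    using continuous_on_mono_section[OF cont \<open>c \<le> d\<close>] by blast
  have ends: "\<phi> c \<in> {\<phi> c..\<phi> d}" "\<phi> d \<in> {\<phi> c..\<phi> d}"
    using \<open>\<phi> c \<le> \<phi> d\<close> by auto
  show ?thesis
    unfolding curve_length_eq_SUP_partitions[of \<gamma>]
  proof (rule SUP_least)
    fix ts assume ts: "ts \<in> partitions (\<phi> c) (\<phi> d)"
    have sub: "set ts \<subseteq> {\<phi> c..\<phi> d}"
      by (rule partitions_subset_interval[OF ts])
    have ts': "sorted ts" "ts \<noteq> []" "hd ts = \<phi> c" "last ts = \<phi> d"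
      using ts by (auto simp: partitions_def strict_sorted_iff)
    have "polygon_length \<gamma> ts = polygon_length h (map \<sigma> ts)"
      unfolding polygon_length_map using sub \<sigma> h by (intro polygon_length_cong) fastforce
    also have "ennreal \<dots> \<le> curve_length h (\<sigma> (\<phi> c)) (\<sigma> (\<phi> d))"
    proof (rule polygon_length_le_curve_length)
      show "sorted (map \<sigma> ts)"
        using ts'(1) mono_on_subset[OF mono sub] by (rule sorted_map_mono)
    qed (use ts' in \<open>auto simp: hd_map last_map\<close>)
    also have "\<dots> \<le> curve_length h c d"
      using \<sigma>[OF ends(1)] \<sigma>[OF ends(2)] mono_onD[OF mono ends(1) ends(2)] \<open>\<phi> c \<le> \<phi> d\<close>
      by (intro curve_length_mono_interval) auto
    finally show "ennreal (polygon_length \<gamma> ts) \<le> curve_length h c d" .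
  qed
qed

lemma subarc_length_le_curve_length:
  fixes \<gamma> h :: "real \<Rightarrow> 'a::metric_space"
  assumes arc: "continuous_on {a..b} \<gamma>" "inj_on \<gamma> {a..b}"
    and curve: "c \<le> d" "continuous_on {c..d} h" "h ` {c..d} \<subseteq> \<gamma> ` {a..b}"
    and ends: "p \<in> {a..b}" "q \<in> {a..b}" "h c = \<gamma> p" "h d = \<gamma> q"
  shows "curve_length \<gamma> (min p q) (max p q) \<le> curve_length h c d"
proof -
  define \<phi> where "\<phi> = the_inv_into {a..b} \<gamma> \<circ> h"
  have "continuous_on (\<gamma> ` {a..b}) (the_inv_into {a..b} \<gamma>)"
    using arc by (intro continuous_on_inv) (auto simp: the_inv_into_f_f)
  then have \<phi>_cont: "continuous_on {c..d} \<phi>"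
    unfolding \<phi>_def using curve by (intro continuous_on_compose) (auto intro: continuous_on_subset)
  have h_eq: "h s = \<gamma> (\<phi> s)" if "s \<in> {c..d}" for s
  proof -
    have "h s \<in> \<gamma> ` {a..b}" using that curve(3) by blast
    then show ?thesis unfolding \<phi>_def by (simp add: f_the_inv_into_f[OF arc(2)])
  qed
  have \<phi>_ends: "\<phi> c = p" "\<phi> d = q"
    unfolding \<phi>_def using ends arc(2) by (simp_all add: the_inv_into_f_f)
  show ?thesis
  proof (cases "p \<le> q")
    case True
    then show ?thesis
      using curve_length_le_reparametrization[of c d \<phi> h \<gamma>] \<phi>_cont curve(1) h_eq \<phi>_ends
      by simp
  next
    case False
    have "continuous_on {c..d} (\<lambda>s. \<phi> (c + d - s))"
      by (rule continuous_on_compose2[OF \<phi>_cont]) (auto intro!: continuous_intros)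
    then have "curve_length \<gamma> q p \<le> curve_length (\<lambda>s. h (c + d - s)) c d"
      using curve_length_le_reparametrization[of c d "\<lambda>s. \<phi> (c + d - s)" "\<lambda>s. h (c + d - s)" \<gamma>]
        curve(1) h_eq \<phi>_ends False by simp
    then show ?thesis
      using False by (simp add: curve_length_reverse)
  qed
qed

section \<open>One-dimensional Hausdorff measure\<close>

lemma diameter_le_dist:
  fixes S :: "'a::metric_space set"
  assumes "\<And>x y. x \<in> S \<Longrightarrow> y \<in> S \<Longrightarrow> dist x y \<le> d" "0 \<le> d"
  shows "diameter S \<le> d"
proof (cases "S = {}")
  case False
  then have "(SUP (x, y)\<in>S \<times> S. dist x y) \<le> d"
    using assms by (intro cSUP_least) auto
  then show ?thesis
    unfolding diameter_def using False by simp
qed (use assms in simp)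

lemma hausdorff1_mono: "A \<subseteq> B \<Longrightarrow> hausdorff1 A \<le> hausdorff1 B"
  unfolding hausdorff1_def hausdorff1_pre_def
  by (intro SUP_mono' INF_superset_mono) auto

lemma hausdorff1_pre_le_hausdorff1: "0 < \<delta> \<Longrightarrow> hausdorff1_pre \<delta> A \<le> hausdorff1 A"
  unfolding hausdorff1_def by (rule SUP_upper) simp

lemma hausdorff1_pre_le_cover:
  assumes "A \<subseteq> (\<Union>i. D i)" "\<And>i. bounded (D i)" "\<And>i. diameter (D i) \<le> \<delta>"
  shows "hausdorff1_pre \<delta> A \<le> (\<Sum>i. ennreal (diameter (D i)))"
  unfolding hausdorff1_pre_def using assms by (intro INF_lower) blast

lemma hausdorff1_contraction_image_le:
  fixes f :: "real \<Rightarrow> 'a::metric_space"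
  assumes "a < b" and f: "\<And>u v. u \<in> {a..b} \<Longrightarrow> v \<in> {a..b} \<Longrightarrow> dist (f u) (f v) \<le> \<bar>u - v\<bar>"
  shows "hausdorff1 (f ` {a<..<b}) \<le> ennreal (b - a)"
  unfolding hausdorff1_def
proof (rule SUP_least)
  fix \<delta> :: real assume "\<delta> \<in> {0<..}"
  then have \<delta>: "0 < \<delta>" by simp
  define N :: nat where "N = nat \<lceil>(b - a) / \<delta>\<rceil> + 1"
  define w where "w = (b - a) / N"
  have N: "0 < N" "(b - a) / \<delta> \<le> real N"
    unfolding N_def by linarith+
  then have w: "0 < w" "w \<le> \<delta>" "real N * w = b - a"
    using \<delta> \<open>a < b\<close> unfolding w_def by (auto simp: field_simps)
  define D where "D i = (if i < N then f ` {a + real i * w .. a + real (Suc i) * w} else {})" for i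
  have piece: "{a + real i * w .. a + real (Suc i) * w} \<subseteq> {a..b}" if "i < N" for i
  proof -
    have "real (Suc i) * w \<le> real N * w"
      using that w(1) by (intro mult_right_mono) auto
    then show ?thesis
      using w by auto
  qed
  have cont: "continuous_on {a..b} f"
    using f by (intro lipschitz_on_continuous_on[of 1] lipschitz_onI) (auto simp: dist_real_def)
  have bounded: "bounded (D i)" for i
  proof (cases "i < N")
    case True
    have "compact (f ` {a + real i * w .. a + real (Suc i) * w})"
      by (intro compact_continuous_image continuous_on_subset[OF cont piece[OF True]] compact_Icc)
    then show ?thesis
      unfolding D_def using True by (simp only: if_True compact_imp_bounded)
  qed (simp add: D_def)
  have diameter: "diameter (D i) \<le> w" for i
  proof (cases "i < N")
    case True
    have "dist (f u) (f v) \<le> w" if "u \<in> {a + real i * w .. a + real (Suc i) * w}"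
      "v \<in> {a + real i * w .. a + real (Suc i) * w}" for u v
    proof -
      have "dist (f u) (f v) \<le> \<bar>u - v\<bar>"
        using that piece[OF True] by (intro f) blast+
      also have "\<bar>u - v\<bar> \<le> w"
        using that by (auto simp: abs_le_iff algebra_simps)
      finally show ?thesis .
    qed
    then show ?thesis
      unfolding D_def using True w(1) by (auto intro!: diameter_le_dist)
  qed (use w in \<open>simp add: D_def\<close>)
  have "f ` {a<..<b} \<subseteq> (\<Union>i. D i)"
  proof
    fix z assume "z \<in> f ` {a<..<b}"
    then obtain u where u: "a < u" "u < b" "z = f u"
      by auto
    define i where "i = nat \<lfloor>(u - a) / w\<rfloor>"
    have "0 \<le> (u - a) / w"
      using u w(1) by simp
    then have "real i \<le> (u - a) / w" "(u - a) / w < real i + 1"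
      unfolding i_def by linarith+
    then have "a + real i * w \<le> u" "u \<le> a + real (Suc i) * w"
      using w(1) by (auto simp: field_simps)
    moreover have "real i * w < real N * w"
      using \<open>a + real i * w \<le> u\<close> u(2) w(3) by linarith
    then have "i < N"
      using w(1) by simp
    ultimately show "z \<in> (\<Union>i. D i)"
      unfolding D_def using u by auto
  qed
  then have "hausdorff1_pre \<delta> (f ` {a<..<b}) \<le> (\<Sum>i. ennreal (diameter (D i)))"
    using bounded order_trans[OF diameter w(2)] by (rule hausdorff1_pre_le_cover)
  also have "\<dots> = (\<Sum>i<N. ennreal (diameter (D i)))"
    by (rule suminf_finite) (auto simp: D_def)
  also have "\<dots> \<le> (\<Sum>i<N. ennreal w)"
    by (intro sum_mono ennreal_leI diameter)
  also have "\<dots> = ennreal (b - a)"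
    using w by (simp add: ennreal_of_nat_eq_real_of_nat ennreal_mult[symmetric])
  finally show "hausdorff1_pre \<delta> (f ` {a<..<b}) \<le> ennreal (b - a)" .
qed

text \<open>Projecting a cover to the distances from \<open>c\<close> turns each member into an interval of
  length at most its diameter.\<close>

lemma diameter_sum_ge_distance_range:
  fixes c :: "'a::metric_space"
  assumes range: "{\<delta><..<\<rho>} \<subseteq> dist c ` P" and cover: "P \<subseteq> (\<Union>i. D i)" and bounded: "\<And>i. bounded (D i)"
  shows "ennreal (\<rho> - \<delta>) \<le> (\<Sum>i. if D i \<inter> P \<noteq> {} then ennreal (diameter (D i)) else 0)"
proof (cases "\<delta> \<le> \<rho>")
  case True
  define a where "a i = Inf (dist c ` (D i \<inter> P))" for i
  define I where "I i = (if D i \<inter> P \<noteq> {} then {a i .. a i + diameter (D i)} else {})" for i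
  have "{\<delta><..<\<rho>} \<subseteq> (\<Union>i. I i)"
  proof
    fix u assume "u \<in> {\<delta><..<\<rho>}"
    then obtain w i where w: "w \<in> D i \<inter> P" "u = dist c w"
      using range cover by blast
    have bdd: "bdd_below (dist c ` (D i \<inter> P))"
      by (rule bdd_belowI[of _ 0]) auto
    have "a i \<le> u"
      unfolding a_def w(2) using w(1) by (intro cInf_lower[OF _ bdd]) auto
    moreover have "u - diameter (D i) \<le> a i"
      unfolding a_def
    proof (rule cInf_greatest)
      show "dist c ` (D i \<inter> P) \<noteq> {}" using w(1) by blast
      fix r assume "r \<in> dist c ` (D i \<inter> P)"
      then obtain w' where w': "w' \<in> D i \<inter> P" "r = dist c w'"
        by blast
      have "u \<le> dist c w' + dist w' w"
        unfolding w(2) by (rule dist_triangle)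
      moreover have "dist w' w \<le> diameter (D i)"
        using diameter_bounded_bound[OF bounded] w(1) w'(1) by blast
      ultimately show "u - diameter (D i) \<le> r"
        using w' by simp
    qed
    ultimately show "u \<in> (\<Union>i. I i)"
      unfolding I_def using w(1) by auto
  qed
  moreover have I_sets: "range I \<subseteq> sets lborel"
    unfolding I_def by auto
  ultimately have "emeasure lborel {\<delta><..<\<rho>} \<le> emeasure lborel (\<Union>i. I i)"
    by (intro emeasure_mono sets.countable_UN)
  also have "\<dots> \<le> (\<Sum>i. emeasure lborel (I i))"
    by (rule emeasure_subadditive_countably[OF I_sets])
  also have "(\<Sum>i. emeasure lborel (I i)) = (\<Sum>i. if D i \<inter> P \<noteq> {} then ennreal (diameter (D i)) else 0)"
    unfolding I_def using diameter_ge_0[OF bounded] by (intro suminf_cong) simp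
  finally show ?thesis
    using True by simp
qed (simp add: ennreal_neg)

lemma ennreal_divide_ge:
  fixes a b :: ennreal
  assumes a: "ennreal A \<le> a" and b: "b \<le> ennreal B" and "0 < B" "0 \<le> A"
  shows "ennreal (A / B) \<le> a / b"
proof (cases "b = 0")
  case True
  show ?thesis
  proof (cases "A = 0")
    case False
    then have "0 < ennreal A"
      using \<open>0 \<le> A\<close> by simp
    then have "0 < a"
      using a by (rule less_le_trans)
    then show ?thesis
      using True by simp
  qed simp
next
  case False
  obtain \<beta> where \<beta>: "0 < \<beta>" "\<beta> \<le> B" "b = ennreal \<beta>"
    using b False \<open>0 < B\<close> by (cases b) (auto simp: ennreal_le_iff top_unique)
  have "ennreal (A / B) \<le> ennreal (A / \<beta>)"
    using assms \<beta> by (intro ennreal_leI divide_left_mono) auto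
  also have "\<dots> = ennreal A / b"
    using \<beta> assms by (simp add: divide_ennreal)
  also have "\<dots> \<le> a / b"
    by (rule divide_right_mono_ennreal[OF a])
  finally show ?thesis .
qed

section \<open>Model volumes and the condition BG\<close>

lemma integral_adjacent_intervals_ratio:
  fixes F :: "real \<Rightarrow> real"
  assumes cont: "continuous_on {\<epsilon> - r..\<epsilon> + r} F" and "0 < r" "0 < F \<epsilon>" "0 < \<theta>"
  shows "\<exists>\<rho>. 0 < \<rho> \<and> \<rho> < r \<and> 0 < integral {\<epsilon> - \<rho>..\<epsilon>} F
    \<and> integral {\<epsilon>..\<epsilon> + \<rho>} F \<le> (1 + \<theta>) * integral {\<epsilon> - \<rho>..\<epsilon>} F"
proof -
  define \<theta>' where "\<theta>' = \<theta> / (2 + \<theta>)"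
  have \<theta>': "0 < \<theta>'" "\<theta>' < 1" "1 + \<theta>' = (1 + \<theta>) * (1 - \<theta>')"
    unfolding \<theta>'_def using \<open>0 < \<theta>\<close> by (auto simp: field_simps)
  have "\<epsilon> \<in> {\<epsilon> - r..\<epsilon> + r}" "0 < \<theta>' * F \<epsilon>"
    using \<open>0 < r\<close> \<theta>'(1) \<open>0 < F \<epsilon>\<close> by auto
  then obtain d where d: "0 < d"
    "\<forall>t\<in>{\<epsilon> - r..\<epsilon> + r}. dist t \<epsilon> < d \<longrightarrow> dist (F t) (F \<epsilon>) < \<theta>' * F \<epsilon>"
    using cont unfolding continuous_on_iff by blast
  define \<rho> where "\<rho> = min (d / 2) (r / 2)"
  have \<rho>: "0 < \<rho>" "\<rho> < r" "\<rho> < d"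
    unfolding \<rho>_def using d \<open>0 < r\<close> by auto
  have close: "\<bar>F t - F \<epsilon>\<bar> \<le> \<theta>' * F \<epsilon>" if "\<epsilon> - \<rho> \<le> t" "t \<le> \<epsilon> + \<rho>" for t
  proof -
    have "t \<in> {\<epsilon> - r..\<epsilon> + r}" "dist t \<epsilon> < d"
      using that \<rho> by (auto simp: dist_real_def)
    then show ?thesis
      using d(2) by (auto simp: dist_real_def)
  qed
  have integrable: "F integrable_on {a..b}" if "\<epsilon> - \<rho> \<le> a" "b \<le> \<epsilon> + \<rho>" for a b
    using that \<rho> by (intro integrable_continuous_interval continuous_on_subset[OF cont]) auto
  have upper: "integral {\<epsilon>..\<epsilon> + \<rho>} F \<le> \<rho> * ((1 + \<theta>') * F \<epsilon>)"
  proof -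
    have "integral {\<epsilon>..\<epsilon> + \<rho>} F \<le> integral {\<epsilon>..\<epsilon> + \<rho>} (\<lambda>_. (1 + \<theta>') * F \<epsilon>)"
      using close \<rho> by (intro integral_le integrable integrable_const_ivl) (force simp: algebra_simps abs_le_iff)+
    then show ?thesis
      using \<rho> by (simp add: algebra_simps)
  qed
  have lower: "\<rho> * ((1 - \<theta>') * F \<epsilon>) \<le> integral {\<epsilon> - \<rho>..\<epsilon>} F"
  proof -
    have "integral {\<epsilon> - \<rho>..\<epsilon>} (\<lambda>_. (1 - \<theta>') * F \<epsilon>) \<le> integral {\<epsilon> - \<rho>..\<epsilon>} F"
      using close \<rho> by (intro integral_le integrable integrable_const_ivl) (force simp: algebra_simps abs_le_iff)+
    then show ?thesis
      using \<rho> by (simp add: algebra_simps)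
  qed
  have "0 < \<rho> * ((1 - \<theta>') * F \<epsilon>)"
    using \<rho> \<theta>' \<open>0 < F \<epsilon>\<close> by simp
  moreover have "integral {\<epsilon>..\<epsilon> + \<rho>} F \<le> (1 + \<theta>) * integral {\<epsilon> - \<rho>..\<epsilon>} F"
  proof -
    have "integral {\<epsilon>..\<epsilon> + \<rho>} F \<le> \<rho> * ((1 + \<theta>') * F \<epsilon>)"
      by (rule upper)
    also have "\<dots> = (1 + \<theta>) * (\<rho> * ((1 - \<theta>') * F \<epsilon>))"
      unfolding \<theta>'(3) by (simp only: mult_ac)
    also have "\<dots> \<le> (1 + \<theta>) * integral {\<epsilon> - \<rho>..\<epsilon>} F"
      using lower \<open>0 < \<theta>\<close> by (intro mult_left_mono) auto
    finally show ?thesis .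
  qed
  ultimately show ?thesis
    using lower \<rho> by (intro exI[of _ \<rho>]) auto
qed

lemma sk_pos:
  assumes t: "0 < t" and "0 < k \<Longrightarrow> sqrt k * t < pi"
  shows "0 < sk k t"
proof -
  consider "0 < k" | "k = 0" | "k < 0"
    by linarith
  then show ?thesis
  proof cases
    case 1
    then have "0 < sin (sqrt k * t)"
      using assms by (intro sin_gt_zero) auto
    then show ?thesis
      using 1 unfolding sk_def by simp
  next
    case 3
    then have "0 < sinh (sqrt (- k) * t)"
      using t by (simp add: sinh_real_pos_iff)
    then show ?thesis
      using 3 unfolding sk_def by simp
  qed (use t in \<open>simp add: sk_def\<close>)
qed

lemma isCont_sk: "isCont (sk k) t"
proof -
  consider "0 < k" | "k = 0" | "k < 0"
    by linarith
  then show ?thesis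
  proof cases
    case 1
    then have "sk k = (\<lambda>t. sin (sqrt k * t) / sqrt k)"
      by (intro ext) (simp add: sk_def)
    then show ?thesis
      using 1 by (auto intro!: continuous_intros)
  next
    case 2
    then have "sk k = (\<lambda>t. t)"
      by (intro ext) (simp add: sk_def)
    then show ?thesis
      by simp
  next
    case 3
    then have "sk k = (\<lambda>t. sinh (sqrt (- k) * t) / sqrt (- k))"
      by (intro ext) (simp add: sk_def)
    then show ?thesis
      using 3 by (auto intro!: continuous_intros isCont_sinh)
  qed
qed

lemma alpha_const_pos: "1 \<le> n \<Longrightarrow> 0 < alpha_const (n - 1)"
  unfolding alpha_const_def by (auto intro!: divide_pos_pos Gamma_real_pos)

lemma Vkn_thin_annuli:
  assumes n: "1 \<le> n" and "0 < \<theta>" "0 < R"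
  shows "\<exists>\<epsilon> \<rho>. 0 < \<rho> \<and> \<rho> < \<epsilon> \<and> \<epsilon> \<le> R \<and> 0 < Vkn k n (\<epsilon> - \<rho>) \<epsilon> \<and>
     Vkn k n \<epsilon> (\<epsilon> + \<rho>) \<le> (1 + \<theta>) * Vkn k n (\<epsilon> - \<rho>) \<epsilon>"
proof -
  define F where "F t = sk k t powr (n - 1)" for t
  define b where "b = (if 0 < k then 1 / sqrt k else 1)"
  define \<epsilon> where "\<epsilon> = min R b / 2"
  have \<epsilon>: "0 < \<epsilon>" "\<epsilon> \<le> R"
    unfolding \<epsilon>_def b_def using \<open>0 < R\<close> by auto
  have sk_pos': "0 < sk k t" if "0 < t" "t \<le> 2 * \<epsilon>" for t
  proof (rule sk_pos[OF that(1)])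
    assume "0 < k"
    then have "sqrt k * t \<le> 1"
      using that unfolding \<epsilon>_def b_def by (simp add: field_simps)
    then show "sqrt k * t < pi"
      using pi_gt3 by simp
  qed
  have "continuous_on {\<epsilon> - \<epsilon> / 2..\<epsilon> + \<epsilon> / 2} F"
  proof (intro continuous_at_imp_continuous_on ballI)
    fix t assume "t \<in> {\<epsilon> - \<epsilon> / 2..\<epsilon> + \<epsilon> / 2}"
    then have "0 < sk k t"
      using \<epsilon> by (intro sk_pos') auto
    then show "isCont F t"
      unfolding F_def isCont_def by (intro tendsto_powr isCont_sk[unfolded isCont_def] tendsto_const) auto
  qed
  moreover have "0 < F \<epsilon>"
    unfolding F_def using sk_pos'[of \<epsilon>] \<epsilon> by simp
  ultimately obtain \<rho> where \<rho>: "0 < \<rho>" "\<rho> < \<epsilon> / 2" "0 < integral {\<epsilon> - \<rho>..\<epsilon>} F"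
      "integral {\<epsilon>..\<epsilon> + \<rho>} F \<le> (1 + \<theta>) * integral {\<epsilon> - \<rho>..\<epsilon>} F"
    using integral_adjacent_intervals_ratio[of \<epsilon> "\<epsilon> / 2" F \<theta>] \<epsilon> \<open>0 < \<theta>\<close> by auto
  have V: "Vkn k n a b' = alpha_const (n - 1) * integral {a..b'} F" for a b'
    unfolding Vkn_def F_def ..
  show ?thesis
    using \<rho> \<epsilon> alpha_const_pos[OF n] unfolding V
    by (intro exI[of _ \<epsilon>] exI[of _ \<rho>]) (auto simp: mult_left_mono)
qed

lemma perturbation_margin_exists:
  fixes C a :: real
  assumes "0 < C" "C < a"
  shows "\<exists>\<theta>. 0 < \<theta> \<and> \<theta> < 1 \<and> C * (1 + \<theta>) < a * (1 - \<theta>)"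
proof -
  define \<theta> where "\<theta> = (a - C) / (2 * (a + C))"
  have bounds: "0 < \<theta>" "\<theta> < 1"
    unfolding \<theta>_def using assms by (auto simp: field_simps)
  have "a * (1 - \<theta>) - C * (1 + \<theta>) = (a - C) - \<theta> * (a + C)"
    by (simp add: algebra_simps)
  also have "\<theta> * (a + C) = (a - C) / 2"
    unfolding \<theta>_def using assms by (simp add: field_simps)
  finally have "C * (1 + \<theta>) < a * (1 - \<theta>)"
    using assms by (simp add: algebra_simps)
  with bounds show ?thesis
    by blast
qed

lemma BG_ratio_le:
  fixes c :: "'a::metric_space"
  assumes BG: "BG TYPE('a) k n C" and "1 \<le> C"
    and radii: "0 \<le> s1" "s1 < s2" "s1 \<le> r1" "r1 < r2" "s2 \<le> r2"
    and U: "U \<in> sets borel" "U \<subseteq> annulus c r1 r2"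
    and lower: "ennreal A \<le> hausdorff1 U" "0 \<le> A"
    and upper: "hausdorff1 (Sset s1 s2 c U) \<le> ennreal B" "0 < B"
    and V: "0 \<le> \<theta>" "0 < Vkn k n s1 s2" "Vkn k n r1 r2 \<le> (1 + \<theta>) * Vkn k n s1 s2"
  shows "A / B \<le> C * (1 + \<theta>)"
proof -
  have "ennreal (A / B) \<le> hausdorff1 U / hausdorff1 (Sset s1 s2 c U)"
    by (rule ennreal_divide_ge[OF lower(1) upper lower(2)])
  also have "\<dots> \<le> ennreal C * ennreal (Vkn k n r1 r2) / ennreal (Vkn k n s1 s2)"
    by (rule BG_def[THEN iffD1, rule_format, OF BG]) (use radii U in auto)
  also have "\<dots> \<le> ennreal (C * (1 + \<theta>))"
  proof (cases "0 \<le> Vkn k n r1 r2")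
    case True
    have "Vkn k n r1 r2 / Vkn k n s1 s2 \<le> 1 + \<theta>"
      using V by (simp add: divide_le_eq)
    then have "C * Vkn k n r1 r2 / Vkn k n s1 s2 \<le> C * (1 + \<theta>)"
      using \<open>1 \<le> C\<close> by (simp add: mult_left_mono times_divide_eq_right[symmetric] del: times_divide_eq_right)
    moreover have "ennreal C * ennreal (Vkn k n r1 r2) / ennreal (Vkn k n s1 s2)
        = ennreal (C * Vkn k n r1 r2 / Vkn k n s1 s2)"
      using \<open>1 \<le> C\<close> True V(2) by (simp add: ennreal_mult[symmetric] divide_ennreal)
    ultimately show ?thesis
      by (simp add: ennreal_leI)
  qed (simp add: ennreal_neg)
  finally show ?thesis
    using \<open>1 \<le> C\<close> V(1) by (simp add: ennreal_le_iff)
qed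

section \<open>Germs and rays of a metric graph\<close>

locale metric_graph_space =
  fixes V :: "'a::metric_space set" and E :: "nat set" and l :: "nat \<Rightarrow> real"
    and gamma :: "nat \<Rightarrow> real \<Rightarrow> 'a"
  assumes graph: "metric_graph V E l gamma" and length_distance: "length_space TYPE('a)"
begin

lemma
  assumes "e \<in> E"
  shows edge_length_pos: "0 < l e"
    and edge_continuous: "continuous_on {0..l e} (gamma e)"
    and edge_inj: "inj_on (gamma e) {0<..<l e}"
    and edge_start_vertex: "gamma e 0 \<in> V"
    and edge_end_vertex: "gamma e (l e) \<in> V"
    and edge_curve_length: "\<And>a b. 0 \<le> a \<Longrightarrow> a \<le> b \<Longrightarrow> b \<le> l e \<Longrightarrow>
          curve_length (gamma e) a b = ennreal (b - a)"
    and edge_interior_notin_vertices: "\<And>t. 0 < t \<Longrightarrow> t < l e \<Longrightarrow> gamma e t \<notin> V"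
proof -
  have "0 < l e \<and> continuous_on {0..l e} (gamma e) \<and> inj_on (gamma e) {0<..<l e}
      \<and> gamma e 0 \<in> V \<and> gamma e (l e) \<in> V
      \<and> (\<forall>a b. 0 \<le> a \<longrightarrow> a \<le> b \<longrightarrow> b \<le> l e \<longrightarrow> curve_length (gamma e) a b = ennreal (b - a))
      \<and> gamma e ` {0<..<l e} \<inter> V = {}"
    using conjunct1[OF graph[unfolded metric_graph_def]] assms by (rule bspec)
  then show "0 < l e" "continuous_on {0..l e} (gamma e)" "inj_on (gamma e) {0<..<l e}"
    "gamma e 0 \<in> V" "gamma e (l e) \<in> V"
    "\<And>a b. 0 \<le> a \<Longrightarrow> a \<le> b \<Longrightarrow> b \<le> l e \<Longrightarrow> curve_length (gamma e) a b = ennreal (b - a)"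
    "\<And>t. 0 < t \<Longrightarrow> t < l e \<Longrightarrow> gamma e t \<notin> V"
    by (simp_all add: disjoint_iff)
qed

lemma edge_interiors_disjoint:
  assumes "e \<in> E" "e' \<in> E" "e \<noteq> e'" "0 < t" "t < l e" "0 < t'" "t' < l e'"
  shows "gamma e t \<noteq> gamma e' t'"
proof -
  have "\<forall>e\<in>E. \<forall>e'\<in>E. e \<noteq> e' \<longrightarrow> gamma e ` {0<..<l e} \<inter> gamma e' ` {0<..<l e'} = {}"
    using graph unfolding metric_graph_def by (elim conjE) assumption
  then have "gamma e ` {0<..<l e} \<inter> gamma e' ` {0<..<l e'} = {}"
    using assms(1-3) by blast
  moreover have "gamma e t \<in> gamma e ` {0<..<l e}" "gamma e' t' \<in> gamma e' ` {0<..<l e'}"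
    using assms(4-7) by auto
  ultimately show ?thesis
    by (metis disjoint_iff)
qed

lemma vertex_or_on_edge: "z \<in> V \<union> (\<Union>e\<in>E. gamma e ` {0..l e})"
proof -
  have cover: "UNIV = V \<union> (\<Union>e\<in>E. gamma e ` {0..l e})"
    using graph unfolding metric_graph_def by (elim conjE) assumption
  show ?thesis
    by (subst cover[symmetric]) (rule UNIV_I)
qed

lemma locally_finite:
  "\<exists>W. open W \<and> z \<in> W \<and> finite (V \<inter> W) \<and> finite {e\<in>E. gamma e ` {0..l e} \<inter> W \<noteq> {}}"
proof -
  have "\<forall>x. \<exists>U. open U \<and> x \<in> U \<and> finite (V \<inter> U) \<and> finite {e\<in>E. gamma e ` {0..l e} \<inter> U \<noteq> {}}"
    using graph unfolding metric_graph_def by (elim conjE) assumption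
  then show ?thesis
    by blast
qed

lemma dist_edge_le:
  assumes "e \<in> E" "0 \<le> a" "a \<le> b" "b \<le> l e"
  shows "dist (gamma e a) (gamma e b) \<le> b - a"
proof -
  have "ennreal (dist (gamma e a) (gamma e b)) \<le> curve_length (gamma e) a b"
    using assms(3) by (rule dist_le_curve_length)
  also have "\<dots> = ennreal (b - a)"
    using edge_curve_length[OF assms] .
  finally show ?thesis
    using assms by (simp add: ennreal_le_iff)
qed

lemma dist_ge_if_curves_long:
  fixes p q :: 'a
  assumes "\<And>h. continuous_on {0..1} h \<Longrightarrow> h 0 = p \<Longrightarrow> h 1 = q \<Longrightarrow> ennreal v \<le> curve_length h 0 1"
  shows "v \<le> dist p q"
proof -
  have "ennreal v \<le> (INF h \<in> {h. continuous_on {0..1} h \<and> h 0 = p \<and> h 1 = q}. curve_length h 0 1)"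
    using assms by (intro INF_greatest) blast
  also have "\<dots> = ennreal (dist p q)"
    using length_distance[unfolded length_space_def, rule_format, of p q] by (rule sym)
  finally show ?thesis
    by (simp add: ennreal_le_iff)
qed

text \<open>A germ \<open>(e, t0, \<sigma>)\<close> at \<open>y = gamma e t0\<close> is the edge \<open>e\<close> leaving \<open>y\<close> in the
  direction \<open>\<sigma> = \<plusminus>1\<close> of its parameter; \<open>ray g\<close> runs along it at unit speed.\<close>

definition germs :: "'a \<Rightarrow> (nat \<times> real \<times> real) set" where
  "germs y = {(e, t0, \<sigma>). e \<in> E \<and> 0 \<le> t0 \<and> t0 \<le> l e \<and> gamma e t0 = y \<and>
       ((\<sigma> = 1 \<and> t0 < l e) \<or> (\<sigma> = -1 \<and> 0 < t0))}"

definition ray :: "nat \<times> real \<times> real \<Rightarrow> real \<Rightarrow> 'a" where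
  "ray = (\<lambda>(e, t0, \<sigma>) u. gamma e (t0 + \<sigma> * u))"

text \<open>At an endpoint \<open>t0\<close> the edge may return to \<open>y\<close> at its other end (a loop), hence \<open>l e / 2\<close>.\<close>

definition germ_room :: "nat \<times> real \<times> real \<Rightarrow> real" where
  "germ_room = (\<lambda>(e, t0, \<sigma>). if 0 < t0 \<and> t0 < l e then min t0 (l e - t0) else l e / 2)"

text \<open>The \<open>1\<close> only keeps the minimum well defined when there are no germs.\<close>

definition inj_radius :: "'a \<Rightarrow> real" where
  "inj_radius y = Min (insert 1 ((\<lambda>g. germ_room g / 2) ` germs y))"

lemma ray_eq: "ray (e, t0, \<sigma>) u = gamma e (t0 + \<sigma> * u)"
  by (simp add: ray_def)

lemma germsD:
  assumes "(e, t0, \<sigma>) \<in> germs y"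
  shows "e \<in> E" "0 \<le> t0" "t0 \<le> l e" "gamma e t0 = y" "(\<sigma> = 1 \<and> t0 < l e) \<or> (\<sigma> = -1 \<and> 0 < t0)"
  using assms unfolding germs_def by auto

lemma germs_finite: "finite (germs y)"
proof -
  obtain W where W: "y \<in> W" "finite {e\<in>E. gamma e ` {0..l e} \<inter> W \<noteq> {}}"
    using locally_finite[of y] by blast
  define EW where "EW = {e\<in>E. gamma e ` {0..l e} \<inter> W \<noteq> {}}"
  define T where "T e = {0, l e} \<union> (gamma e -` {y} \<inter> {0<..<l e})" for e
  have "finite (T e)" if "e \<in> E" for e
    using that unfolding T_def by (intro finite_UnI finite_vimage_IntI edge_inj) auto
  then have "finite (\<Union>e\<in>EW. \<Union>t0\<in>T e. {(e, t0, 1), (e, t0, -1)})"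
    using W(2) unfolding EW_def[symmetric] by (intro finite_UN_I) (auto simp: EW_def)
  moreover have "germs y \<subseteq> (\<Union>e\<in>EW. \<Union>t0\<in>T e. {(e, t0, 1), (e, t0, -1)})"
  proof
    fix g assume g: "g \<in> germs y"
    obtain e t0 \<sigma> where geq: "g = (e, t0, \<sigma>)" by (cases g)
    note gd = germsD[OF g[unfolded geq]]
    have "e \<in> EW" unfolding EW_def using gd W(1) by force
    moreover have "t0 \<in> T e" unfolding T_def using gd by auto
    moreover have "\<sigma> = 1 \<or> \<sigma> = -1" using gd by auto
    ultimately show "g \<in> (\<Union>e\<in>EW. \<Union>t0\<in>T e. {(e, t0, 1), (e, t0, -1)})"
      using geq by blast
  qed
  ultimately show ?thesis
    by (rule finite_subset[rotated])
qed

lemma germ_room_pos: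
  assumes "g \<in> germs y"
  shows "0 < germ_room g"
proof -
  obtain e t0 \<sigma> where geq: "g = (e, t0, \<sigma>)" by (cases g)
  then have "0 < l e"
    using edge_length_pos germsD(1) assms by blast
  then show ?thesis
    unfolding geq germ_room_def by auto
qed

lemma inj_radius_pos: "0 < inj_radius y"
  using germs_finite germ_room_pos unfolding inj_radius_def by (subst Min_gr_iff) auto

lemma inj_radius_le_germ_room: "g \<in> germs y \<Longrightarrow> inj_radius y \<le> germ_room g / 2"
  using germs_finite unfolding inj_radius_def by (intro Min_le) auto

lemma
  assumes g: "(e, t0, \<sigma>) \<in> germs y" and u: "0 < u" "u \<le> inj_radius y"
  shows ray_param_interior: "t0 + \<sigma> * u \<in> {0<..<l e}"
    and ray_param_lt_half: "u < l e / 2"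
proof -
  note gd = germsD[OF g]
  have room: "u \<le> germ_room (e, t0, \<sigma>) / 2"
    using inj_radius_le_germ_room[OF g] u by simp
  have "t0 + \<sigma> * u \<in> {0<..<l e} \<and> u < l e / 2"
  proof (cases "0 < t0 \<and> t0 < l e")
    case True
    then show ?thesis
      using room gd(5) u by (auto simp: germ_room_def)
  next
    case False
    then show ?thesis
      using room gd(2,3,5) u edge_length_pos[OF gd(1)] by (auto simp: germ_room_def)
  qed
  then show "t0 + \<sigma> * u \<in> {0<..<l e}" "u < l e / 2"
    by auto
qed

lemma ray_param_in_edge:
  assumes g: "(e, t0, \<sigma>) \<in> germs y" and u: "0 \<le> u" "u \<le> inj_radius y"
  shows "t0 + \<sigma> * u \<in> {0..l e}"
  using ray_param_interior[OF g _ u(2)] germsD(2,3)[OF g] u(1) by (cases "u = 0") auto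

lemma ray_0: "g \<in> germs y \<Longrightarrow> ray g 0 = y"
  unfolding ray_def germs_def by auto

lemma ray_notin_vertices:
  assumes "g \<in> germs y" "0 < u" "u \<le> inj_radius y"
  shows "ray g u \<notin> V"
proof -
  obtain e t0 \<sigma> where geq: "g = (e, t0, \<sigma>)" by (cases g)
  then have "t0 + \<sigma> * u \<in> {0<..<l e}"
    using ray_param_interior assms by blast
  then show ?thesis
    using edge_interior_notin_vertices germsD(1) assms(1) unfolding geq ray_eq by auto
qed

lemma germ_param_interior_if_not_vertex:
  assumes "(e, t0, \<sigma>) \<in> germs y" "y \<notin> V"
  shows "t0 \<in> {0<..<l e}"
  using assms edge_start_vertex edge_end_vertex by (auto simp: germs_def order.order_iff_strict)

lemma ray_neq_center:
  assumes g: "g \<in> germs y" and u: "0 < u" "u \<le> inj_radius y"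
  shows "ray g u \<noteq> y"
proof
  assume eq: "ray g u = y"
  obtain e t0 \<sigma> where geq: "g = (e, t0, \<sigma>)" by (cases g)
  note gd = germsD[OF g[unfolded geq]]
  have "y \<notin> V"
    using ray_notin_vertices[OF g u] eq by simp
  then have "t0 \<in> {0<..<l e}"
    using germ_param_interior_if_not_vertex g geq by blast
  moreover have "gamma e (t0 + \<sigma> * u) = gamma e t0"
    using eq gd(4) unfolding geq ray_eq by simp
  ultimately have "t0 + \<sigma> * u = t0"
    using edge_inj[OF gd(1)] ray_param_interior[OF g[unfolded geq] u] by (auto dest: inj_onD)
  then show False
    using gd(5) u(1) by auto
qed

lemma ray_inj:
  assumes g: "g \<in> germs y" and u: "0 \<le> u" "u \<le> inj_radius y" and v: "0 \<le> v" "v \<le> inj_radius y"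
    and eq: "ray g u = ray g v"
  shows "u = v"
proof -
  obtain e t0 \<sigma> where geq: "g = (e, t0, \<sigma>)" by (cases g)
  note gd = germsD[OF g[unfolded geq]]
  consider "u = 0" "v = 0" | "u = 0" "0 < v" | "0 < u" "v = 0" | "0 < u" "0 < v"
    using u v by linarith
  then show ?thesis
  proof cases
    case 2
    then show ?thesis using ray_neq_center[OF g _ v(2)] eq ray_0[OF g] by auto
  next
    case 3
    then show ?thesis using ray_neq_center[OF g _ u(2)] eq ray_0[OF g] by auto
  next
    case 4
    then have "t0 + \<sigma> * u = t0 + \<sigma> * v"
      using inj_onD[OF edge_inj[OF gd(1)]] eq ray_param_interior[OF g[unfolded geq]] u v
      unfolding geq ray_eq by blast
    then show ?thesis
      using gd(5) by auto
  qed simp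
qed

lemma germs_same_edge:
  assumes g: "(e, t0, \<sigma>) \<in> germs y" and g': "(e, t0', \<sigma>') \<in> germs y" and ne: "t0 \<noteq> t0'"
  shows "(t0 = 0 \<and> \<sigma> = 1 \<and> t0' = l e \<and> \<sigma>' = -1) \<or> (t0 = l e \<and> \<sigma> = -1 \<and> t0' = 0 \<and> \<sigma>' = 1)"
proof -
  note gd = germsD[OF g] and gd' = germsD[OF g']
  have "y \<in> V"
  proof (rule ccontr)
    assume "y \<notin> V"
    then have "t0 \<in> {0<..<l e}" "t0' \<in> {0<..<l e}"
      using germ_param_interior_if_not_vertex g g' by blast+
    then show False
      using inj_onD[OF edge_inj[OF gd(1)]] gd(4) gd'(4) ne by auto
  qed
  then have "t \<notin> {0<..<l e}" if "gamma e t = y" for t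
    using that edge_interior_notin_vertices[OF gd(1)] by auto
  then have "t0 \<notin> {0<..<l e}" "t0' \<notin> {0<..<l e}"
    using gd(4) gd'(4) by blast+
  then show ?thesis
    using gd gd' ne by auto
qed

lemma rays_disjoint:
  assumes g: "g \<in> germs y" and g': "g' \<in> germs y" and ne: "g \<noteq> g'"
    and u: "0 < u" "u \<le> inj_radius y" and v: "0 < v" "v \<le> inj_radius y"
  shows "ray g u \<noteq> ray g' v"
proof
  assume eq: "ray g u = ray g' v"
  obtain e t0 \<sigma> where geq: "g = (e, t0, \<sigma>)" by (cases g)
  obtain e' t0' \<sigma>' where geq': "g' = (e', t0', \<sigma>')" by (cases g')
  note gd = germsD[OF g[unfolded geq]] and gd' = germsD[OF g'[unfolded geq']]
  have pu: "t0 + \<sigma> * u \<in> {0<..<l e}" "u < l e / 2"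
    using ray_param_interior[OF g[unfolded geq] u] ray_param_lt_half[OF g[unfolded geq] u] by auto
  have pv: "t0' + \<sigma>' * v \<in> {0<..<l e'}" "v < l e' / 2"
    using ray_param_interior[OF g'[unfolded geq'] v] ray_param_lt_half[OF g'[unfolded geq'] v] by auto
  have eq': "gamma e (t0 + \<sigma> * u) = gamma e' (t0' + \<sigma>' * v)"
    using eq unfolding geq geq' ray_eq .
  then have ee: "e = e'"
    using edge_interiors_disjoint[OF gd(1) gd'(1)] pu pv by fastforce
  then have pp: "t0 + \<sigma> * u = t0' + \<sigma>' * v"
    using inj_onD[OF edge_inj[OF gd(1)] eq'[unfolded ee[symmetric]]] pu pv ee by auto
  show False
  proof (cases "t0 = t0'")
    case True
    then show False
      using pp gd(5) gd'(5) u(1) v(1) ne ee geq geq' by auto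
  next
    case False
    then show False
      using germs_same_edge[OF g[unfolded geq] g'[unfolded geq' ee[symmetric]]] pp pu pv ee by auto
  qed
qed

lemma dist_ray_le:
  assumes g: "g \<in> germs y" and u: "0 \<le> u" "u \<le> inj_radius y" and v: "0 \<le> v" "v \<le> inj_radius y"
  shows "dist (ray g u) (ray g v) \<le> \<bar>u - v\<bar>"
proof -
  obtain e t0 \<sigma> where geq: "g = (e, t0, \<sigma>)" by (cases g)
  note gd = germsD[OF g[unfolded geq]]
  have pu: "t0 + \<sigma> * u \<in> {0..l e}" and pv: "t0 + \<sigma> * v \<in> {0..l e}"
    using ray_param_in_edge[OF g[unfolded geq]] u v by auto
  have "dist (gamma e (t0 + \<sigma> * u)) (gamma e (t0 + \<sigma> * v)) \<le> \<bar>(t0 + \<sigma> * u) - (t0 + \<sigma> * v)\<bar>"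
  proof (cases "t0 + \<sigma> * u \<le> t0 + \<sigma> * v")
    case True
    then show ?thesis using dist_edge_le[OF gd(1), of "t0 + \<sigma> * u" "t0 + \<sigma> * v"] pu pv by simp
  next
    case False
    then show ?thesis using dist_edge_le[OF gd(1), of "t0 + \<sigma> * v" "t0 + \<sigma> * u"] pu pv
      by (simp add: dist_commute)
  qed
  also have "\<dots> = \<bar>u - v\<bar>"
    using gd(5) by (auto simp: algebra_simps)
  finally show ?thesis
    unfolding geq ray_eq .
qed

lemma continuous_on_ray: "g \<in> germs y \<Longrightarrow> continuous_on {0..inj_radius y} (ray g)"
  by (rule lipschitz_on_continuous_on[of 1]) (auto intro!: lipschitz_onI simp: dist_ray_le dist_real_def)

lemma compact_ray_image:
  assumes "g \<in> germs y" "0 \<le> a" "b \<le> inj_radius y"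
  shows "compact (ray g ` {a..b})"
  using assms by (intro compact_continuous_image continuous_on_subset[OF continuous_on_ray]) auto

section \<open>The star of a point\<close>

lemma on_ray_if_near_preimage:
  assumes e: "e \<in> E" "t0 \<in> {0..l e}" "t \<in> {0..l e}" "gamma e t0 = y"
    and near: "t \<noteq> t0" "\<bar>t - t0\<bar> < inj_radius y"
  shows "gamma e t \<in> (\<Union>g\<in>germs y. ray g ` {0<..<inj_radius y})"
proof (cases "t0 < t")
  case True
  then have "(e, t0, 1) \<in> germs y" "gamma e t = ray (e, t0, 1) (t - t0)"
    using e unfolding germs_def by (auto simp: ray_eq)
  then show ?thesis
    using True near by force
next
  case False
  then have "(e, t0, -1) \<in> germs y" "gamma e t = ray (e, t0, -1) (t0 - t)"
    using e near(1) unfolding germs_def by (auto simp: ray_eq)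
  then show ?thesis
    using False near by force
qed

text \<open>Away from the preimages of \<open>y\<close>, the finitely many vertices and edges near \<open>y\<close>
  form a compact set missing \<open>y\<close>.\<close>

lemma star_neighbourhood_exists:
  "\<exists>\<eta>>0. \<eta> \<le> inj_radius y \<and> ball y \<eta> \<subseteq> insert y (\<Union>g\<in>germs y. ray g ` {0<..<inj_radius y})"
proof -
  define L where "L = inj_radius y"
  obtain W where W: "open W" "y \<in> W" "finite (V \<inter> W)" "finite {e\<in>E. gamma e ` {0..l e} \<inter> W \<noteq> {}}"
    using locally_finite[of y] by blast
  define EW where "EW = {e\<in>E. gamma e ` {0..l e} \<inter> W \<noteq> {}}"
  define K where "K e = {0..l e} \<inter> (\<Inter>t0\<in>{t0\<in>{0..l e}. gamma e t0 = y}. {t. L \<le> \<bar>t - t0\<bar>})" for e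
  have "compact (K e)" for e
  proof -
    have "closed {t::real. L \<le> \<bar>t - t0\<bar>}" for t0
      by (intro closed_Collect_le continuous_intros)
    then show ?thesis
      unfolding K_def by (intro compact_Int_closed compact_Icc closed_INT) auto
  qed
  then have "compact (gamma e ` K e)" if "e \<in> E" for e
    using that by (intro compact_continuous_image continuous_on_subset[OF edge_continuous]) (auto simp: K_def)
  then have "compact (\<Union>e\<in>EW. gamma e ` K e)"
    using W(4) unfolding EW_def by (intro compact_UN) auto
  moreover have "compact (V \<inter> W - {y})"
    using W(3) by (intro finite_imp_compact) auto
  ultimately have "compact ((V \<inter> W - {y}) \<union> (\<Union>e\<in>EW. gamma e ` K e))"
    by (intro compact_Un)
  moreover have "y \<notin> (V \<inter> W - {y}) \<union> (\<Union>e\<in>EW. gamma e ` K e)"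
    using inj_radius_pos[of y] unfolding K_def L_def by force
  ultimately obtain \<eta>0 where \<eta>0: "\<eta>0 > 0" "ball y \<eta>0 \<subseteq> - ((V \<inter> W - {y}) \<union> (\<Union>e\<in>EW. gamma e ` K e))"
    by (meson ComplI compact_imp_closed open_Compl open_contains_ball)
  obtain \<eta>1 where \<eta>1: "\<eta>1 > 0" "ball y \<eta>1 \<subseteq> W"
    using W(1,2) open_contains_ball by blast
  define \<eta> where "\<eta> = min (min \<eta>0 \<eta>1) L"
  have "z \<in> (\<Union>g\<in>germs y. ray g ` {0<..<L})" if z: "z \<in> ball y \<eta>" "z \<noteq> y" for z
  proof -
    have "z \<in> ball y \<eta>0" "z \<in> ball y \<eta>1"
      using z(1) unfolding \<eta>_def by auto
    then have zW: "z \<in> W" and zF: "z \<notin> (V \<inter> W - {y}) \<union> (\<Union>e\<in>EW. gamma e ` K e)"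
      using \<eta>0(2) \<eta>1(2) by blast+
    then obtain e t where et: "e \<in> E" "t \<in> {0..l e}" "z = gamma e t"
      using vertex_or_on_edge[of z] z(2) by blast
    then have "e \<in> EW"
      using zW unfolding EW_def by blast
    then have "t \<notin> K e"
      using zF et(3) by blast
    then obtain t0 where t0: "t0 \<in> {0..l e}" "gamma e t0 = y" "\<bar>t - t0\<bar> < L"
      using et(2) unfolding K_def by force
    then show ?thesis
      using on_ray_if_near_preimage[OF et(1) t0(1) et(2) t0(2)] et(3) z(2) unfolding L_def by fastforce
  qed
  moreover have "0 < \<eta>" "\<eta> \<le> L"
    using \<eta>0 \<eta>1 inj_radius_pos[of y] unfolding \<eta>_def L_def by auto
  ultimately show ?thesis
    unfolding L_def by blast
qed

definition star_radius :: "'a \<Rightarrow> real" where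
  "star_radius y = (SOME \<eta>. 0 < \<eta> \<and> \<eta> \<le> inj_radius y \<and>
     ball y \<eta> \<subseteq> insert y (\<Union>g\<in>germs y. ray g ` {0<..<inj_radius y}))"

lemma
  shows star_radius_pos: "0 < star_radius y"
    and star_radius_le: "star_radius y \<le> inj_radius y"
    and star_radius_ball: "ball y (star_radius y) \<subseteq> insert y (\<Union>g\<in>germs y. ray g ` {0<..<inj_radius y})"
  using someI_ex[OF star_neighbourhood_exists[of y]] unfolding star_radius_def by auto

lemma star_ballE:
  assumes "z \<in> ball y (star_radius y)" "z \<noteq> y"
  obtains g u where "g \<in> germs y" "0 < u" "u < inj_radius y" "z = ray g u"
proof -
  have "z \<in> (\<Union>g\<in>germs y. ray g ` {0<..<inj_radius y})"
    using star_radius_ball assms by blast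
  then obtain g u where "g \<in> germs y" "u \<in> {0<..<inj_radius y}" "z = ray g u"
    by blast
  then show ?thesis
    by (intro that[of g u]) auto
qed

definition branch :: "'a \<Rightarrow> nat \<times> real \<times> real \<Rightarrow> 'a set" where
  "branch y g = ray g ` {0<..<inj_radius y} \<inter> ball y (star_radius y)"

lemma ray_in_branch:
  "0 < u \<Longrightarrow> u < inj_radius y \<Longrightarrow> ray g u \<in> ball y (star_radius y) \<Longrightarrow> ray g u \<in> branch y g"
  unfolding branch_def by auto

lemma branch_subset_ray: "branch y g \<subseteq> ray g ` {0..inj_radius y}"
  unfolding branch_def by auto

lemma branches_disjoint:
  assumes "g \<in> germs y" "g' \<in> germs y" "g \<noteq> g'"
  shows "branch y g \<inter> branch y g' = {}"
  using rays_disjoint[OF assms] unfolding branch_def by fastforce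

lemma punctured_ball_subset_branches: "ball y (star_radius y) - {y} \<subseteq> (\<Union>g\<in>germs y. branch y g)"
proof
  fix z assume z: "z \<in> ball y (star_radius y) - {y}"
  then obtain g u where "g \<in> germs y" "0 < u" "u < inj_radius y" "z = ray g u"
    using star_ballE[of z y] by blast
  then show "z \<in> (\<Union>g\<in>germs y. branch y g)"
    using z ray_in_branch by blast
qed

lemma branch_eq:
  assumes g: "g \<in> germs y"
  shows "branch y g = (ball y (star_radius y) - {y}) - (\<Union>g'\<in>germs y - {g}. ray g' ` {0..inj_radius y})"
proof
  show "branch y g \<subseteq> (ball y (star_radius y) - {y}) - (\<Union>g'\<in>germs y - {g}. ray g' ` {0..inj_radius y})"
  proof
    fix w assume w: "w \<in> branch y g"
    then obtain u where u: "0 < u" "u < inj_radius y" "w = ray g u"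
      unfolding branch_def by auto
    have "w \<noteq> ray g' v" if "g' \<in> germs y - {g}" "v \<in> {0..inj_radius y}" for g' v
    proof (cases "v = 0")
      case True
      then show ?thesis
        using u ray_neq_center[OF g, of u] ray_0[of g' y] that by auto
    next
      case False
      then show ?thesis
        using u rays_disjoint[OF g, of g' u v] that by auto
    qed
    moreover have "w \<noteq> y"
      using u ray_neq_center[OF g] by auto
    ultimately show "w \<in> (ball y (star_radius y) - {y}) - (\<Union>g'\<in>germs y - {g}. ray g' ` {0..inj_radius y})"
      using w unfolding branch_def by blast
  qed
  show "(ball y (star_radius y) - {y}) - (\<Union>g'\<in>germs y - {g}. ray g' ` {0..inj_radius y}) \<subseteq> branch y g"
  proof
    fix w assume w: "w \<in> (ball y (star_radius y) - {y}) - (\<Union>g'\<in>germs y - {g}. ray g' ` {0..inj_radius y})"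
    then obtain g' u where g': "g' \<in> germs y" "0 < u" "u < inj_radius y" "w = ray g' u"
      using star_ballE[of w y] by blast
    then have "g' = g"
      using w by force
    then show "w \<in> branch y g"
      using g' w unfolding branch_def by auto
  qed
qed

lemma open_branch: "g \<in> germs y \<Longrightarrow> open (branch y g)"
  unfolding branch_eq
  by (intro open_Diff open_delete open_ball closed_UN ballI compact_imp_closed compact_ray_image)
     (auto intro: finite_Diff germs_finite)

lemma dist_center_ray_le: "g \<in> germs y \<Longrightarrow> 0 \<le> t \<Longrightarrow> t \<le> inj_radius y \<Longrightarrow> dist y (ray g t) \<le> t"
  using dist_ray_le[of g y 0 t] ray_0[of g y] inj_radius_pos[of y] by simp

lemma image_subset_branch:
  assumes g: "g \<in> germs y" and T: "connected T" "continuous_on T h"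
    and hT: "h ` T \<subseteq> ball y (star_radius y) - {y}" and s: "s \<in> T" "h s \<in> branch y g"
  shows "h ` T \<subseteq> branch y g"
proof -
  define B where "B = (\<Union>g'\<in>germs y - {g}. branch y g')"
  have "open B"
    unfolding B_def by (intro open_UN ballI open_branch) blast
  moreover have "branch y g \<inter> B = {}"
    unfolding B_def using branches_disjoint[OF g] by blast
  moreover have "h ` T \<subseteq> branch y g \<union> B"
    unfolding B_def using hT punctured_ball_subset_branches by blast
  ultimately have "branch y g \<inter> h ` T = {} \<or> B \<inter> h ` T = {}"
    using connectedD[OF connected_continuous_image[OF T(2,1)] open_branch[OF g]] by blast
  then show ?thesis
    using s \<open>h ` T \<subseteq> branch y g \<union> B\<close> by blast
qed

lemma curve_length_along_ray_ge:
  assumes g: "g \<in> germs y" and s: "s \<in> {0..inj_radius y}" and t: "t \<in> {0..inj_radius y}"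
    and h: "c \<le> d" "continuous_on {c..d} h" "h ` {c..d} \<subseteq> ray g ` {0..inj_radius y}"
    and ends: "h c = ray g s" "h d = ray g t"
  shows "ennreal \<bar>t - s\<bar> \<le> curve_length h c d"
proof -
  obtain e t0 \<sigma> where geq: "g = (e, t0, \<sigma>)" by (cases g)
  note gd = germsD[OF g[unfolded geq]]
  define L where "L = inj_radius y"
  define a where "a = min t0 (t0 + \<sigma> * L)"
  define b where "b = max t0 (t0 + \<sigma> * L)"
  have "0 < L"
    unfolding L_def by (rule inj_radius_pos)
  then have \<sigma>: "(\<sigma> = 1 \<and> a = t0 \<and> b = t0 + L) \<or> (\<sigma> = -1 \<and> a = t0 - L \<and> b = t0)"
    using gd(5) unfolding a_def b_def by auto
  have param: "t0 + \<sigma> * u \<in> {a..b}" if "u \<in> {0..L}" for u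
    using \<sigma> that by auto
  have unparam: "\<sigma> * (p - t0) \<in> {0..L} \<and> t0 + \<sigma> * (\<sigma> * (p - t0)) = p" if "p \<in> {a..b}" for p
    using \<sigma> that by auto
  have "t0 + \<sigma> * 0 \<in> {0..l e}" "t0 + \<sigma> * L \<in> {0..l e}"
    using ray_param_in_edge[OF g[unfolded geq], of 0] ray_param_in_edge[OF g[unfolded geq], of L]
      \<open>0 < L\<close> unfolding L_def by auto
  then have ab: "0 \<le> a" "b \<le> l e"
    unfolding a_def b_def by auto
  have inj: "inj_on (gamma e) {a..b}"
  proof (rule inj_onI)
    fix p q assume p: "p \<in> {a..b}" and q: "q \<in> {a..b}" and eq: "gamma e p = gamma e q"
    have "ray g (\<sigma> * (p - t0)) = ray g (\<sigma> * (q - t0))"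
      using unparam[OF p] unparam[OF q] eq unfolding geq ray_eq by simp
    then have "\<sigma> * (p - t0) = \<sigma> * (q - t0)"
      using unparam[OF p] unparam[OF q] unfolding L_def by (intro ray_inj[OF g]) auto
    then show "p = q"
      using gd(5) by auto
  qed
  define p where "p = t0 + \<sigma> * s"
  define q where "q = t0 + \<sigma> * t"
  have pq: "p \<in> {a..b}" "q \<in> {a..b}"
    unfolding p_def q_def using param s t unfolding L_def by auto
  have "curve_length (gamma e) (min p q) (max p q) \<le> curve_length h c d"
  proof (rule subarc_length_le_curve_length[OF _ inj h(1,2) _ pq])
    show "continuous_on {a..b} (gamma e)"
      using ab by (intro continuous_on_subset[OF edge_continuous[OF gd(1)]]) auto
    have "ray g ` {0..L} \<subseteq> gamma e ` {a..b}"
      using param unfolding geq ray_eq by auto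
    then show "h ` {c..d} \<subseteq> gamma e ` {a..b}"
      using h(3) unfolding L_def by (rule order_trans[rotated])
    show "h c = gamma e p" "h d = gamma e q"
      using ends unfolding p_def q_def geq ray_eq by simp_all
  qed
  moreover have "curve_length (gamma e) (min p q) (max p q) = ennreal (max p q - min p q)"
    using pq ab by (intro edge_curve_length[OF gd(1)]) auto
  moreover have "max p q - min p q = \<bar>t - s\<bar>"
    using gd(5) unfolding p_def q_def by (auto simp: max_def min_def)
  ultimately show ?thesis
    by simp
qed

text \<open>A curve from the centre into the branch of \<open>g\<close> that stays in the star must run,
  after its last visit to the centre, inside that branch.\<close>

lemma curve_length_from_center_ge:
  assumes g: "g \<in> germs y" and t: "0 < t" "t < inj_radius y"
    and h: "a \<le> b" "continuous_on {a..b} h" "h ` {a..b} \<subseteq> ball y (star_radius y)"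
    and ends: "h a = y" "h b = ray g t"
  shows "ennreal t \<le> curve_length h a b"
proof -
  define Z where "Z = {s \<in> {a..b}. h s = y}"
  define \<tau> where "\<tau> = Sup Z"
  have Z_bdd: "bdd_above Z"
    unfolding Z_def by (rule bdd_aboveI[of _ b]) auto
  have "\<tau> \<in> Z"
    unfolding \<tau>_def
  proof (rule closed_contains_Sup[OF _ Z_bdd])
    show "Z \<noteq> {}" using h(1) ends(1) unfolding Z_def by auto
    show "closed Z"
      unfolding Z_def by (rule continuous_closed_preimage_constant[OF h(2) closed_atLeastAtMost])
  qed
  then have \<tau>: "a \<le> \<tau>" "\<tau> \<le> b" "h \<tau> = y"
    unfolding Z_def by auto
  have "h b \<noteq> y"
    using ray_neq_center[OF g t(1)] t(2) ends(2) by simp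
  then have "\<tau> < b"
    using \<tau> by (cases "\<tau> = b") auto
  have off_center: "h s \<noteq> y" if "s \<in> {\<tau><..b}" for s
  proof
    assume "h s = y"
    then have "s \<in> Z"
      using that \<tau>(1) unfolding Z_def by auto
    then have "s \<le> \<tau>"
      unfolding \<tau>_def by (rule cSup_upper[OF _ Z_bdd])
    then show False
      using that by simp
  qed
  have "h b \<in> ball y (star_radius y)"
    using h(1) by (intro subsetD[OF h(3)] imageI) auto
  then have "h b \<in> branch y g"
    using ray_in_branch[OF t, of g] ends(2) by simp
  have "h ` {\<tau><..b} \<subseteq> branch y g"
  proof (rule image_subset_branch[OF g connected_Ioc continuous_on_subset[OF h(2)]])
    show "{\<tau><..b} \<subseteq> {a..b}" "b \<in> {\<tau><..b}"
      using \<tau> \<open>\<tau> < b\<close> by auto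
    show "h ` {\<tau><..b} \<subseteq> ball y (star_radius y) - {y}"
      using off_center h(3) \<tau> by fastforce
  qed fact
  moreover have "y \<in> ray g ` {0..inj_radius y}"
    using ray_0[OF g] inj_radius_pos[of y] by (intro image_eqI[of y "ray g" 0]) auto
  moreover have "{\<tau>..b} = insert \<tau> {\<tau><..b}"
    using \<tau>(2) by auto
  ultimately have "h ` {\<tau>..b} \<subseteq> ray g ` {0..inj_radius y}"
    using branch_subset_ray[of y g] \<tau>(3) by auto
  then have "ennreal \<bar>t - 0\<bar> \<le> curve_length h \<tau> b"
    using \<tau> t ends ray_0[OF g] inj_radius_pos[of y]
    by (intro curve_length_along_ray_ge[OF g _ _ _ continuous_on_subset[OF h(2)]]) auto
  also have "\<dots> \<le> curve_length h a b"
    using \<tau> by (intro curve_length_mono_interval) auto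
  finally show ?thesis
    using t by simp
qed

lemma curve_length_to_center_ge:
  assumes g: "g \<in> germs y" and t: "0 < t" "t < inj_radius y"
    and h: "a \<le> b" "continuous_on {a..b} h" "h ` {a..b} \<subseteq> ball y (star_radius y)"
    and ends: "h a = ray g t" "h b = y"
  shows "ennreal t \<le> curve_length h a b"
proof -
  have "(\<lambda>s. h (a + b - s)) ` {a..b} \<subseteq> h ` {a..b}"
    by (auto intro!: image_eqI)
  then have "ennreal t \<le> curve_length (\<lambda>s. h (a + b - s)) a b"
    using h ends
    by (intro curve_length_from_center_ge[OF g t] continuous_on_compose2[OF h(2)])
       (auto intro!: continuous_intros)
  then show ?thesis
    by (simp add: curve_length_reverse)
qed

lemma dist_center_ray_ge:
  assumes g: "g \<in> germs y" and t: "0 < t" "t < inj_radius y"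
  shows "min t (star_radius y) \<le> dist y (ray g t)"
proof (rule dist_ge_if_curves_long)
  fix h :: "real \<Rightarrow> 'a" assume h: "continuous_on {0..1} h" "h 0 = y" "h 1 = ray g t"
  show "ennreal (min t (star_radius y)) \<le> curve_length h 0 1"
  proof (cases "h ` {0..1} \<subseteq> ball y (star_radius y)")
    case True
    then have "ennreal t \<le> curve_length h 0 1"
      using h by (intro curve_length_from_center_ge[OF g t]) auto
    then show ?thesis
      by (rule order_trans[rotated]) (simp add: ennreal_leI)
  next
    case False
    then obtain \<tau> where "\<tau> \<in> {0..1}" "h \<tau> \<notin> ball y (star_radius y)"
      unfolding image_subset_iff by blast
    then have "ennreal (star_radius y - 0) \<le> curve_length h 0 1"
      using h by (intro curve_length_ge_if_leaves_ball) auto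
    then show ?thesis
      by (rule order_trans[rotated]) (simp add: ennreal_leI)
  qed
qed

text \<open>A curve between two different branches either leaves the star or passes through
  the centre.\<close>

lemma dist_rays_ge:
  assumes g: "g \<in> germs y" "g' \<in> germs y" "g \<noteq> g'"
    and s: "0 < s" "s < inj_radius y" and t: "0 < t" "t < inj_radius y"
  shows "min (s + t) (star_radius y - s) \<le> dist (ray g s) (ray g' t)"
proof (rule dist_ge_if_curves_long)
  fix h :: "real \<Rightarrow> 'a" assume h: "continuous_on {0..1} h" "h 0 = ray g s" "h 1 = ray g' t"
  show "ennreal (min (s + t) (star_radius y - s)) \<le> curve_length h 0 1"
  proof (cases "h ` {0..1} \<subseteq> ball y (star_radius y)")
    case True
    have "\<exists>\<tau>\<in>{0..1}. h \<tau> = y"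
    proof (rule ccontr)
      assume off_center: "\<not> ?thesis"
      have "h 0 \<in> h ` {0..1}" "h 1 \<in> h ` {0..1}"
        by auto
      then have "h 0 \<in> ball y (star_radius y)" "h 1 \<in> ball y (star_radius y)"
        using True by blast+
      then have in_branch: "h 0 \<in> branch y g" "h 1 \<in> branch y g'"
        using h ray_in_branch[OF s, of g] ray_in_branch[OF t, of g'] by auto
      have "h ` {0..1} \<subseteq> ball y (star_radius y) - {y}"
        using True off_center by auto
      then have "h ` {0..1} \<subseteq> branch y g"
        using in_branch(1) by (intro image_subset_branch[OF g(1) connected_Icc h(1), of 0]) auto
      then show False
        using in_branch(2) branches_disjoint[OF g] \<open>h 1 \<in> h ` {0..1}\<close> by blast
    qed
    then obtain \<tau> where \<tau>: "\<tau> \<in> {0..1}" "h \<tau> = y"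
      by blast
    have "ennreal s \<le> curve_length h 0 \<tau>"
      using h \<tau> True by (intro curve_length_to_center_ge[OF g(1) s] continuous_on_subset[OF h(1)]) auto
    moreover have "ennreal t \<le> curve_length h \<tau> 1"
      using h \<tau> True by (intro curve_length_from_center_ge[OF g(2) t] continuous_on_subset[OF h(1)]) auto
    ultimately have "ennreal s + ennreal t \<le> curve_length h 0 1"
      using curve_length_superadditive[of 0 \<tau> 1 h] \<tau> by (auto intro: order_trans add_mono)
    then have "ennreal (s + t) \<le> curve_length h 0 1"
      using s t by (simp add: ennreal_plus[symmetric] del: ennreal_plus)
    then show ?thesis
      by (rule order_trans[rotated]) (simp add: ennreal_leI)
  next
    case False
    then obtain \<tau> where "\<tau> \<in> {0..1}" "h \<tau> \<notin> ball y (star_radius y)"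
      unfolding image_subset_iff by blast
    moreover have "dist y (h 0) \<le> s"
      using dist_center_ray_le[OF g(1)] s h(2) by simp
    ultimately have "ennreal (star_radius y - s) \<le> curve_length h 0 1"
      by (intro curve_length_ge_if_leaves_ball) auto
    then show ?thesis
      by (rule order_trans[rotated]) (simp add: ennreal_leI)
  qed
qed

lemma dist_center_ray:
  assumes g: "g \<in> germs y" and t: "0 \<le> t" "t < star_radius y"
  shows "dist y (ray g t) = t"
proof (cases "t = 0")
  case True
  then show ?thesis using ray_0[OF g] by simp
next
  case False
  then have "min t (star_radius y) \<le> dist y (ray g t)"
    using t star_radius_le[of y] by (intro dist_center_ray_ge[OF g]) auto
  moreover have "dist y (ray g t) \<le> t"
    using t star_radius_le[of y] by (intro dist_center_ray_le[OF g]) auto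
  ultimately show ?thesis
    using t by simp
qed

lemma dist_rays:
  assumes g: "g \<in> germs y" "g' \<in> germs y" "g \<noteq> g'"
    and st: "0 < s" "0 < t" "2 * s + t \<le> star_radius y"
  shows "dist (ray g s) (ray g' t) = s + t"
proof -
  have "s < inj_radius y" "t < inj_radius y"
    using st star_radius_le[of y] by auto
  then have "min (s + t) (star_radius y - s) \<le> dist (ray g s) (ray g' t)"
    using st by (intro dist_rays_ge[OF g]) auto
  moreover have "dist (ray g s) (ray g' t) \<le> dist (ray g s) y + dist y (ray g' t)"
    by (rule dist_triangle)
  moreover have "dist y (ray g s) \<le> s" "dist y (ray g' t) \<le> t"
    using st \<open>s < inj_radius y\<close> \<open>t < inj_radius y\<close> g by (auto intro!: dist_center_ray_le)
  ultimately show ?thesis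
    using st by (simp add: dist_commute)
qed

lemma ball_eq_star:
  assumes "0 < \<delta>" "\<delta> \<le> star_radius y"
  shows "ball y \<delta> = insert y (\<Union>g\<in>germs y. ray g ` {0<..<\<delta>})"
proof
  show "ball y \<delta> \<subseteq> insert y (\<Union>g\<in>germs y. ray g ` {0<..<\<delta>})"
  proof
    fix z assume z: "z \<in> ball y \<delta>"
    show "z \<in> insert y (\<Union>g\<in>germs y. ray g ` {0<..<\<delta>})"
    proof (cases "z = y")
      case False
      have "z \<in> ball y (star_radius y)"
        using z assms by auto
      then obtain g u where gu: "g \<in> germs y" "0 < u" "u < inj_radius y" "z = ray g u"
        using star_ballE[of z y] False by blast
      then have "min u (star_radius y) < \<delta>"
        using dist_center_ray_ge[OF gu(1-3)] z by simp
      then have "u < \<delta>"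
        using assms by linarith
      then have "z \<in> ray g ` {0<..<\<delta>}"
        using gu by auto
      then show ?thesis
        using gu(1) by blast
    qed simp
  qed
  show "insert y (\<Union>g\<in>germs y. ray g ` {0<..<\<delta>}) \<subseteq> ball y \<delta>"
  proof
    fix z assume "z \<in> insert y (\<Union>g\<in>germs y. ray g ` {0<..<\<delta>})"
    then consider "z = y" | g u where "g \<in> germs y" "0 < u" "u < \<delta>" "z = ray g u"
      by auto
    then show "z \<in> ball y \<delta>"
    proof cases
      case 1
      then show ?thesis using assms by simp
    next
      case 2
      then have "dist y z \<le> u"
        using dist_center_ray_le[OF 2(1), of u] assms star_radius_le[of y] by auto
      then show ?thesis
        using 2 by simp
    qed
  qed
qed

section \<open>Components near a point and the degree\<close>

lemma ray_segment_eq: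
  assumes g: "g \<in> germs y" and p: "0 \<le> p1" "p2 \<le> star_radius y"
  shows "ray g ` {p1<..<p2} = branch y g \<inter> {z. p1 < dist y z \<and> dist y z < p2}"
proof
  show "ray g ` {p1<..<p2} \<subseteq> branch y g \<inter> {z. p1 < dist y z \<and> dist y z < p2}"
  proof
    fix w assume "w \<in> ray g ` {p1<..<p2}"
    then obtain u where u: "p1 < u" "u < p2" "w = ray g u"
      by auto
    then have "dist y w = u"
      using dist_center_ray[OF g] p by simp
    then show "w \<in> branch y g \<inter> {z. p1 < dist y z \<and> dist y z < p2}"
      using u p star_radius_le[of y] by (auto intro!: ray_in_branch)
  qed
  show "branch y g \<inter> {z. p1 < dist y z \<and> dist y z < p2} \<subseteq> ray g ` {p1<..<p2}"
  proof
    fix w assume w: "w \<in> branch y g \<inter> {z. p1 < dist y z \<and> dist y z < p2}"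
    then obtain u where u: "0 < u" "u < inj_radius y" "w = ray g u"
      unfolding branch_def by auto
    have "min u (star_radius y) \<le> dist y w"
      using dist_center_ray_ge[OF g u(1,2)] u(3) by simp
    then have "u < star_radius y"
      using w p by (auto simp: min_def split: if_splits)
    then have "dist y w = u"
      using dist_center_ray[OF g] u by simp
    then show "w \<in> ray g ` {p1<..<p2}"
      using w u by auto
  qed
qed

lemma open_ray_segment:
  assumes "g \<in> germs y" "0 \<le> p1" "p2 \<le> star_radius y"
  shows "open (ray g ` {p1<..<p2})"
  unfolding ray_segment_eq[OF assms]
  by (intro open_Int open_branch assms(1) open_Collect_conj open_Collect_less continuous_intros)

lemma connected_star:
  assumes G: "G \<subseteq> germs y" and \<delta>: "0 < \<delta>" "\<delta> \<le> inj_radius y"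
  shows "connected (insert y (\<Union>g\<in>G. ray g ` {0<..<\<delta>}))"
proof -
  have "insert y (\<Union>g\<in>G. ray g ` {0<..<\<delta>}) = \<Union>(insert {y} ((\<lambda>g. ray g ` {0..<\<delta>}) ` G))"
  proof
    show "insert y (\<Union>g\<in>G. ray g ` {0<..<\<delta>}) \<subseteq> \<Union>(insert {y} ((\<lambda>g. ray g ` {0..<\<delta>}) ` G))"
      by auto
    show "\<Union>(insert {y} ((\<lambda>g. ray g ` {0..<\<delta>}) ` G)) \<subseteq> insert y (\<Union>g\<in>G. ray g ` {0<..<\<delta>})"
    proof
      fix z assume "z \<in> \<Union>(insert {y} ((\<lambda>g. ray g ` {0..<\<delta>}) ` G))"
      then consider "z = y" | g u where "g \<in> G" "0 \<le> u" "u < \<delta>" "z = ray g u"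
        by auto
      then show "z \<in> insert y (\<Union>g\<in>G. ray g ` {0<..<\<delta>})"
      proof cases
        case 2
        show ?thesis
        proof (cases "u = 0")
          case True
          then show ?thesis using ray_0[of g y] G 2 by auto
        next
          case False
          then have "z \<in> ray g ` {0<..<\<delta>}"
            using 2 by auto
          then show ?thesis
            using 2(1) by blast
        qed
      qed simp
    qed
  qed
  also have "connected \<dots>"
  proof (rule connected_Union)
    show "connected S" if "S \<in> insert {y} ((\<lambda>g. ray g ` {0..<\<delta>}) ` G)" for S
      using that G \<delta>
      by (auto intro!: connected_continuous_image[OF continuous_on_subset[OF continuous_on_ray]])
    have "y \<in> ray g ` {0..<\<delta>}" if "g \<in> G" for g
      using ray_0[of g y] that G \<delta>(1) by (intro image_eqI[of y _ 0]) auto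
    then show "\<Inter>(insert {y} ((\<lambda>g. ray g ` {0..<\<delta>}) ` G)) \<noteq> {}"
      by blast
  qed
  finally show ?thesis .
qed

text \<open>Otherwise \<open>U \<inter> ray g ` {p1<..<p2}\<close> would be open and closed in \<open>U\<close>.\<close>

lemma ray_gap_disconnects:
  assumes U: "connected U" "y \<in> U" and g: "g \<in> germs y"
    and p: "0 < p1" "p1 < q" "q < p2" "p2 < star_radius y"
    and out: "ray g p1 \<notin> U" "ray g p2 \<notin> U" and "ray g q \<in> U"
  shows False
proof -
  define A where "A = U \<inter> ray g ` {p1<..<p2}"
  have "openin (top_of_set U) A"
    unfolding A_def using p by (intro openin_open_Int open_ray_segment[OF g]) auto
  moreover have "A = U \<inter> ray g ` {p1..p2}"
  proof
    show "U \<inter> ray g ` {p1..p2} \<subseteq> A"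
    proof
      fix w assume w: "w \<in> U \<inter> ray g ` {p1..p2}"
      then obtain u where u: "p1 \<le> u" "u \<le> p2" "w = ray g u"
        by auto
      then have "u \<noteq> p1" "u \<noteq> p2"
        using w out by auto
      then show "w \<in> A"
        unfolding A_def using u w by auto
    qed
  qed (auto simp: A_def)
  then have "closedin (top_of_set U) A"
    using p star_radius_le[of y]
    by (auto intro!: closedin_closed_Int compact_imp_closed compact_ray_image[OF g])
  ultimately have "A = {} \<or> A = U"
    using U(1) unfolding connected_clopen by blast
  moreover have "A \<noteq> {}"
    unfolding A_def using \<open>ray g q \<in> U\<close> p by auto
  moreover have "y \<notin> A"
  proof
    assume "y \<in> A"
    then obtain u where "p1 < u" "u < p2" "y = ray g u"
      unfolding A_def by auto
    then show False
      using ray_neq_center[OF g, of u] p star_radius_le[of y] by auto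
  qed
  ultimately show False
    using U(2) by blast
qed

lemma ray_initially_in_or_out:
  assumes U: "connected U" "y \<in> U" and g: "g \<in> germs y"
  shows "\<exists>\<delta>>0. \<delta> \<le> star_radius y / 2 \<and> ((\<forall>u\<in>{0<..<\<delta>}. ray g u \<in> U) \<or> (\<forall>u\<in>{0<..<\<delta>}. ray g u \<notin> U))"
proof -
  define H where "H = star_radius y / 2"
  have H: "0 < H" "H < star_radius y"
    unfolding H_def using star_radius_pos[of y] by auto
  show ?thesis
  proof (cases "\<forall>u\<in>{0<..<H}. ray g u \<in> U")
    case True
    then show ?thesis using H unfolding H_def by blast
  next
    case False
    then obtain p where p: "0 < p" "p < H" "ray g p \<notin> U"
      by auto
    show ?thesis
    proof (cases "\<exists>q\<in>{0<..<p}. ray g q \<in> U")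
      case True
      then obtain q where q: "0 < q" "q < p" "ray g q \<in> U"
        by auto
      have "ray g u \<in> U" if "u \<in> {0<..<q}" for u
        using ray_gap_disconnects[OF U g, of u q p] that q p H by auto
      then show ?thesis
        using q p H unfolding H_def by (intro exI[of _ q]) auto
    next
      case False
      then show ?thesis
        using p H unfolding H_def by (intro exI[of _ p]) auto
    qed
  qed
qed

lemma connected_Int_ball_exists:
  fixes U :: "'a set"
  assumes U: "connected U" "z \<in> U" and r: "0 < r"
  shows "\<exists>\<delta>>0. \<delta> \<le> r \<and> connected (U \<inter> ball z \<delta>)"
proof -
  obtain d where d: "\<And>g. g \<in> germs z \<Longrightarrow> 0 < d g \<and> d g \<le> star_radius z / 2 \<and>
      ((\<forall>u\<in>{0<..<d g}. ray g u \<in> U) \<or> (\<forall>u\<in>{0<..<d g}. ray g u \<notin> U))"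
    using ray_initially_in_or_out[OF U] by metis
  define G where "G = {g \<in> germs z. \<forall>u\<in>{0<..<d g}. ray g u \<in> U}"
  define \<delta> where "\<delta> = Min (insert (min r (star_radius z / 2)) (d ` germs z))"
  have fin: "finite (insert (min r (star_radius z / 2)) (d ` germs z))"
    using germs_finite by simp
  have \<delta>_pos: "0 < \<delta>"
    unfolding \<delta>_def using fin d r star_radius_pos[of z] by (subst Min_gr_iff) auto
  have \<delta>_le: "\<delta> \<le> r" "\<delta> \<le> star_radius z"
    using Min_le[OF fin, of "min r (star_radius z / 2)"] star_radius_pos[of z] unfolding \<delta>_def by auto
  have \<delta>_le_d: "\<delta> \<le> d g" if "g \<in> germs z" for g
    unfolding \<delta>_def using fin that by (auto intro: Min_le)
  have "U \<inter> ball z \<delta> = insert z (\<Union>g\<in>G. ray g ` {0<..<\<delta>})"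
  proof -
    have "ray g u \<in> U \<longleftrightarrow> g \<in> G" if "g \<in> germs z" "0 < u" "u < \<delta>" for g u
      using d[OF that(1)] \<delta>_le_d[OF that(1)] that unfolding G_def by fastforce
    then show ?thesis
      unfolding ball_eq_star[OF \<delta>_pos \<delta>_le(2)] using U(2) unfolding G_def by auto
  qed
  moreover have "connected (insert z (\<Union>g\<in>G. ray g ` {0<..<\<delta>}))"
    using \<delta>_pos \<delta>_le star_radius_le[of z] unfolding G_def by (intro connected_star) auto
  ultimately show ?thesis
    using \<delta>_pos \<delta>_le by auto
qed

lemma openin_component_delete:
  fixes U :: "'a set"
  assumes U: "connected U" and K: "K \<in> components (U - {x})"
  shows "openin (top_of_set U) K"
proof -
  have "\<exists>T. openin (top_of_set U) T \<and> z \<in> T \<and> T \<subseteq> K" if z: "z \<in> K" for z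
  proof -
    have zU: "z \<in> U - {x}"
      using z K in_components_subset by blast
    then obtain \<delta> where \<delta>: "0 < \<delta>" "\<delta> \<le> dist z x" "connected (U \<inter> ball z \<delta>)"
      using connected_Int_ball_exists[OF U, of z "dist z x"] by auto
    have "U \<inter> ball z \<delta> \<subseteq> K"
      using \<delta> zU z by (intro components_maximal[OF K \<delta>(3)]) auto
    then show ?thesis
      using \<delta>(1) zU by (intro exI[of _ "U \<inter> ball z \<delta>"]) (auto intro: openin_open_Int)
  qed
  then show ?thesis
    by (subst openin_subopen) blast
qed

lemma component_delete_meets_ball:
  fixes U :: "'a set"
  assumes U: "connected U" "x \<in> U" and K: "K \<in> components (U - {x})" and "0 < r"
  shows "K \<inter> ball x r \<noteq> {}"
proof
  assume "K \<inter> ball x r = {}"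
  moreover obtain C where C: "closed C" "K = (U - {x}) \<inter> C"
    using closedin_component[OF K] unfolding closedin_closed by blast
  ultimately have "K = U \<inter> (C - ball x r)"
    using \<open>0 < r\<close> by auto
  then have "closedin (top_of_set U) K"
    using C(1) by (simp add: closedin_closed_Int closed_Diff)
  moreover have "openin (top_of_set U) K"
    by (rule openin_component_delete[OF U(1) K])
  ultimately have "K = {} \<or> K = U"
    using U(1) unfolding connected_clopen by blast
  then show False
    using in_components_nonempty[OF K] in_components_subset[OF K] U(2) by blast
qed

text \<open>Every component of \<open>U - {x}\<close> contains the initial segment of some germ at \<open>x\<close>,
  and different components contain different ones.\<close>

lemma components_delete_le_germs:
  fixes U :: "'a set"
  assumes U: "connected U" "x \<in> interior U"
  shows "finite (components (U - {x})) \<and> card (components (U - {x})) \<le> card (germs x)"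
proof -
  obtain r where r: "0 < r" "ball x r \<subseteq> U"
    using U(2) mem_interior by blast
  define r' where "r' = min r (star_radius x)"
  have r': "0 < r'" "r' \<le> star_radius x" "r' \<le> r"
    unfolding r'_def using r star_radius_pos[of x] by auto
  define P where "P g = ray g ` {0<..<r'}" for g
  have star: "ball x r' = insert x (\<Union>g\<in>germs x. P g)"
    unfolding P_def by (rule ball_eq_star[OF r'(1,2)])
  have P_sub: "P g \<subseteq> U - {x}" if g: "g \<in> germs x" for g
  proof
    fix w assume w: "w \<in> P g"
    then have "w \<in> ball x r'"
      using star g by blast
    then have "w \<in> U"
      using r r' by auto
    moreover obtain u where "0 < u" "u < r'" "w = ray g u"
      using w unfolding P_def by auto
    then have "w \<noteq> x"
      using ray_neq_center[OF g, of u] r'(2) star_radius_le[of x] by auto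
    ultimately show "w \<in> U - {x}"
      by simp
  qed
  have P_conn: "connected (P g)" if "g \<in> germs x" for g
    unfolding P_def using r'(2) star_radius_le[of x]
    by (intro connected_continuous_image[OF continuous_on_subset[OF continuous_on_ray[OF that]]]) auto
  have P_ne: "P g \<noteq> {}" for g
    unfolding P_def using r' by auto
  have "x \<in> U"
    using U(2) interior_subset by blast
  have "\<exists>g\<in>germs x. K \<inter> P g \<noteq> {}" if K: "K \<in> components (U - {x})" for K
    using component_delete_meets_ball[OF U(1) \<open>x \<in> U\<close> K r'(1)] in_components_subset[OF K]
    unfolding star by blast
  then obtain f where f: "\<And>K. K \<in> components (U - {x}) \<Longrightarrow> f K \<in> germs x \<and> K \<inter> P (f K) \<noteq> {}"
    by metis
  have "P (f K) \<subseteq> K" if "K \<in> components (U - {x})" for K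
    using components_maximal[OF that P_conn P_sub] f[OF that] by blast
  then have "inj_on f (components (U - {x}))"
  proof (intro inj_onI)
    fix K1 K2 assume K: "K1 \<in> components (U - {x})" "K2 \<in> components (U - {x})" "f K1 = f K2"
    then have "P (f K1) \<subseteq> K1 \<inter> K2"
      using \<open>\<And>K. K \<in> components (U - {x}) \<Longrightarrow> P (f K) \<subseteq> K\<close> by (metis le_inf_iff)
    then show "K1 = K2"
      using P_ne components_nonoverlap[OF K(1,2)] by blast
  qed
  moreover have "f ` components (U - {x}) \<subseteq> germs x"
    using f by blast
  ultimately show ?thesis
    using inj_on_finite[OF _ _ germs_finite] card_inj_on_le[OF _ _ germs_finite] by blast
qed

lemma deg_le_card_germs: "deg x \<le> ereal (real (card (germs x)))"
  unfolding deg_def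
proof (rule SUP_least)
  fix U assume "U \<in> {U. connected U \<and> x \<in> interior U}"
  then have "finite (components (U - {x})) \<and> card (components (U - {x})) \<le> card (germs x)"
    by (intro components_delete_le_germs) auto
  then show "num_components (U - {x}) \<le> ereal (real (card (germs x)))"
    unfolding num_components_def by simp
qed

section \<open>Counting germs with BG\<close>

lemma hausdorff1_ray_segment_le:
  assumes "g \<in> germs y" "0 < \<rho>" "\<rho> \<le> inj_radius y"
  shows "hausdorff1 (ray g ` {0<..<\<rho>}) \<le> ennreal \<rho>"
  using hausdorff1_contraction_image_le[of 0 \<rho> "ray g"] dist_ray_le[OF assms(1)] assms(2,3) by simp

lemma dist_rays_gt:
  assumes g: "g \<in> germs y" "g' \<in> germs y" "g \<noteq> g'"
    and uv: "\<delta> < u" "u < \<rho>" "\<delta> < v" "v < \<rho>" and "0 \<le> \<delta>" "2 * \<rho> < star_radius y"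
  shows "\<delta> < dist (ray g u) (ray g' v)"
proof -
  have "min (u + v) (star_radius y - u) \<le> dist (ray g u) (ray g' v)"
    using assms star_radius_le[of y] by (intro dist_rays_ge[OF g]) auto
  then show ?thesis
    using assms by (auto simp: min_def split: if_splits)
qed

lemma hausdorff1_pre_ray_segments_ge:
  assumes J: "J \<subseteq> germs y" and \<delta>: "0 < \<delta>" "\<delta> < \<rho>" "2 * \<rho> < star_radius y"
    and A: "(\<Union>j\<in>J. ray j ` {0<..<\<rho>}) \<subseteq> A"
  shows "ennreal (real (card J) * (\<rho> - \<delta>)) \<le> hausdorff1_pre \<delta> A"
  unfolding hausdorff1_pre_def
proof (rule INF_greatest)
  fix D :: "nat \<Rightarrow> 'a set"
  assume "D \<in> {D. A \<subseteq> (\<Union>i. D i) \<and> (\<forall>i. bounded (D i) \<and> diameter (D i) \<le> \<delta>)}"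
  then have cover: "A \<subseteq> (\<Union>i. D i)" and bounded: "\<And>i. bounded (D i)"
    and small: "\<And>i. diameter (D i) \<le> \<delta>"
    by auto
  define P where "P j = ray j ` {\<delta><..<\<rho>}" for j
  define m where "m j i = (if D i \<inter> P j \<noteq> {} then ennreal (diameter (D i)) else 0)" for j i
  have J_finite: "finite J"
    using J germs_finite finite_subset by blast
  have each_ray: "ennreal (\<rho> - \<delta>) \<le> (\<Sum>i. m j i)" if j: "j \<in> J" for j
    unfolding m_def
  proof (rule diameter_sum_ge_distance_range[OF _ _ bounded])
    show "{\<delta><..<\<rho>} \<subseteq> dist y ` P j"
    proof
      fix u assume u: "u \<in> {\<delta><..<\<rho>}"
      then have "u = dist y (ray j u)"
        using \<delta> j J by (intro dist_center_ray[symmetric]) auto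
      then show "u \<in> dist y ` P j"
        unfolding P_def using u by (intro image_eqI[of u _ "ray j u"]) auto
    qed
    have "P j \<subseteq> ray j ` {0<..<\<rho>}"
      unfolding P_def using \<delta> by (intro image_mono) auto
    also have "\<dots> \<subseteq> A"
      using A j by blast
    finally show "P j \<subseteq> (\<Union>i. D i)"
      using cover by blast
  qed
  have at_most_one_ray: "(\<Sum>j\<in>J. m j i) \<le> ennreal (diameter (D i))" for i
  proof -
    define Ji where "Ji = {j \<in> J. D i \<inter> P j \<noteq> {}}"
    have sum_Ji: "(\<Sum>j\<in>J. m j i) = (\<Sum>j\<in>Ji. m j i)"
      using J_finite by (intro sum.mono_neutral_right) (auto simp: Ji_def m_def)
    have "j = j'" if jj: "j \<in> Ji" "j' \<in> Ji" for j j'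
    proof (rule ccontr)
      assume "j \<noteq> j'"
      obtain u v where uv: "\<delta> < u" "u < \<rho>" "ray j u \<in> D i" "\<delta> < v" "v < \<rho>" "ray j' v \<in> D i"
        using jj unfolding Ji_def P_def by auto
      have "dist (ray j u) (ray j' v) \<le> diameter (D i)"
        by (rule diameter_bounded_bound[OF bounded uv(3) uv(6)])
      also note small
      finally have "dist (ray j u) (ray j' v) \<le> \<delta>" .
      then show False
        using dist_rays_gt[of j y j' \<delta> u \<rho> v] jj J uv \<delta> \<open>j \<noteq> j'\<close> unfolding Ji_def by auto
    qed
    then consider "Ji = {}" | j where "Ji = {j}"
      by blast
    then show ?thesis
    proof cases
      case (2 j)
      then have "m j i = ennreal (diameter (D i))"
        unfolding Ji_def m_def by auto
      then show ?thesis
        using sum_Ji 2 by simp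
    qed (use sum_Ji in simp)
  qed
  have "ennreal (real (card J) * (\<rho> - \<delta>)) = (\<Sum>j\<in>J. ennreal (\<rho> - \<delta>))"
    using \<delta> by (simp add: ennreal_mult ennreal_of_nat_eq_real_of_nat)
  also have "\<dots> \<le> (\<Sum>j\<in>J. \<Sum>i. m j i)"
    by (intro sum_mono each_ray)
  also have "\<dots> = (\<Sum>i. \<Sum>j\<in>J. m j i)"
    by (intro suminf_sum[symmetric] summableI)
  also have "\<dots> \<le> (\<Sum>i. ennreal (diameter (D i)))"
    by (intro suminf_le at_most_one_ray summableI)
  finally show "ennreal (real (card J) * (\<rho> - \<delta>)) \<le> (\<Sum>i. ennreal (diameter (D i)))" .
qed

lemma hausdorff1_ray_segments_ge:
  assumes "J \<subseteq> germs y" "0 < \<delta>" "\<delta> < \<rho>" "2 * \<rho> < star_radius y"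
  shows "ennreal (real (card J) * (\<rho> - \<delta>)) \<le> hausdorff1 (\<Union>j\<in>J. ray j ` {0<..<\<rho>})"
  using hausdorff1_pre_ray_segments_ge[OF assms order_refl] hausdorff1_pre_le_hausdorff1[OF assms(2)]
  by (rule order_trans)

lemma ray_segments_subset_annulus:
  assumes g0: "g0 \<in> germs x" and J: "J \<subseteq> germs x - {g0}"
    and "0 < \<rho>" "\<rho> < \<epsilon>" "3 * \<epsilon> \<le> star_radius x"
  shows "(\<Union>j\<in>J. ray j ` {0<..<\<rho>}) \<subseteq> annulus (ray g0 \<epsilon>) \<epsilon> (\<epsilon> + \<rho>)"
proof
  fix z assume "z \<in> (\<Union>j\<in>J. ray j ` {0<..<\<rho>})"
  then obtain j t where jt: "j \<in> J" "0 < t" "t < \<rho>" "z = ray j t"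
    by auto
  then have "dist (ray g0 \<epsilon>) z = \<epsilon> + t"
    unfolding jt(4) using J assms by (intro dist_rays[OF g0]) auto
  then show "z \<in> annulus (ray g0 \<epsilon>) \<epsilon> (\<epsilon> + \<rho>)"
    unfolding annulus_def using jt assms by auto
qed

text \<open>A point between \<open>c = ray g0 \<epsilon>\<close> and a point of another branch on a geodesic is
  within \<open>2 \<epsilon>\<close> of \<open>x\<close>; off the branch of \<open>g0\<close> it would be farther than \<open>\<epsilon>\<close> from \<open>c\<close>,
  so every such geodesic runs through \<open>x\<close>.\<close>

lemma Sset_ray_segments_subset:
  assumes g0: "g0 \<in> germs x" and J: "J \<subseteq> germs x - {g0}"
    and \<rho>: "0 < \<rho>" "\<rho> < \<epsilon>" "5 * \<epsilon> \<le> star_radius x"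
  shows "Sset (\<epsilon> - \<rho>) \<epsilon> (ray g0 \<epsilon>) (\<Union>j\<in>J. ray j ` {0<..<\<rho>}) \<subseteq> ray g0 ` {0<..<\<rho>}"
proof
  define c where "c = ray g0 \<epsilon>"
  fix y assume "y \<in> Sset (\<epsilon> - \<rho>) \<epsilon> (ray g0 \<epsilon>) (\<Union>j\<in>J. ray j ` {0<..<\<rho>})"
  then obtain j t where y: "\<epsilon> - \<rho> < dist c y" "dist c y < \<epsilon>"
    and jt: "j \<in> J" "0 < t" "t < \<rho>" and geodesic: "dist c y + dist y (ray j t) = dist c (ray j t)"
    using \<rho> unfolding Sset_def annulus_def c_def by auto
  have j: "j \<in> germs x" "g0 \<noteq> j"
    using J jt(1) by auto
  have dist_cz: "dist c (ray j t) = \<epsilon> + t"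
    unfolding c_def using jt \<rho> by (intro dist_rays[OF g0 j]) auto
  have dist_xc: "dist x c = \<epsilon>"
    unfolding c_def using \<rho> by (intro dist_center_ray[OF g0]) auto
  have "dist x y < 2 * \<epsilon>"
    using dist_triangle[of x y c] dist_xc y by simp
  moreover have "ball x (2 * \<epsilon>) = insert x (\<Union>g\<in>germs x. ray g ` {0<..<2 * \<epsilon>})"
    using \<rho> by (intro ball_eq_star) auto
  ultimately have "y \<in> insert x (\<Union>g\<in>germs x. ray g ` {0<..<2 * \<epsilon>})"
    by (metis mem_ball)
  then consider "y = x" | g u where "g \<in> germs x" "0 < u" "u < 2 * \<epsilon>" "y = ray g u"
    by auto
  then show "y \<in> ray g0 ` {0<..<\<rho>}"
  proof cases
    case 1
    then show ?thesis
      using dist_xc y by (simp add: dist_commute)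
  next
    case (2 g u)
    show ?thesis
    proof (cases "g = g0")
      case False
      have "dist c y = \<epsilon> + u"
        unfolding c_def 2(4) using 2 False \<rho> by (intro dist_rays[OF g0]) auto
      then show ?thesis
        using y 2 by simp
    next
      case True
      have "min (u + t) (star_radius x - u) \<le> dist y (ray j t)"
        unfolding 2(4) True using 2 jt \<rho> star_radius_le[of x] by (intro dist_rays_ge[OF g0 j]) auto
      moreover have "u + t \<le> star_radius x - u"
        using 2 jt \<rho> by auto
      ultimately have "u + t \<le> dist y (ray j t)"
        by simp
      then have "u < \<rho>"
        using geodesic dist_cz y by simp
      then show ?thesis
        using 2 True by auto
    qed
  qed
qed

lemma card_germs_le:
  assumes BG: "BG TYPE('a) k n C" and n: "1 \<le> n" and C: "1 \<le> C"
  shows "real (card (germs x)) \<le> C + 1"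
proof (rule ccontr)
  assume many: "\<not> real (card (germs x)) \<le> C + 1"
  then have "germs x \<noteq> {}"
    using C by auto
  then obtain g0 where g0: "g0 \<in> germs x"
    by blast
  define J where "J = germs x - {g0}"
  define a where "a = real (card J)"
  have "C < a"
    using many g0 germs_finite[of x] unfolding a_def J_def
    by (simp add: card_Diff_singleton of_nat_diff)
  obtain \<theta> where \<theta>: "0 < \<theta>" "\<theta> < 1" "C * (1 + \<theta>) < a * (1 - \<theta>)"
    using perturbation_margin_exists[of C a] C \<open>C < a\<close> by auto
  obtain \<epsilon> \<rho> where \<epsilon>\<rho>: "0 < \<rho>" "\<rho> < \<epsilon>" "\<epsilon> \<le> star_radius x / 5" "0 < Vkn k n (\<epsilon> - \<rho>) \<epsilon>"
    "Vkn k n \<epsilon> (\<epsilon> + \<rho>) \<le> (1 + \<theta>) * Vkn k n (\<epsilon> - \<rho>) \<epsilon>"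
    using Vkn_thin_annuli[OF n \<theta>(1), of "star_radius x / 5" k] star_radius_pos[of x] by auto
  define U where "U = (\<Union>j\<in>J. ray j ` {0<..<\<rho>})"
  have J: "J \<subseteq> germs x - {g0}"
    unfolding J_def by simp
  have "open U"
    unfolding U_def using J \<epsilon>\<rho> by (intro open_UN ballI open_ray_segment) auto
  have "ennreal (a * (\<rho> - \<theta> * \<rho>)) \<le> hausdorff1 U"
    unfolding a_def U_def using \<theta> \<epsilon>\<rho> J
    by (intro hausdorff1_ray_segments_ge) (auto simp: mult_less_cancel_right2)
  moreover have "hausdorff1 (Sset (\<epsilon> - \<rho>) \<epsilon> (ray g0 \<epsilon>) U) \<le> ennreal \<rho>"
  proof -
    have "hausdorff1 (Sset (\<epsilon> - \<rho>) \<epsilon> (ray g0 \<epsilon>) U) \<le> hausdorff1 (ray g0 ` {0<..<\<rho>})"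
      unfolding U_def using g0 J \<epsilon>\<rho> by (intro hausdorff1_mono Sset_ray_segments_subset) auto
    also have "\<dots> \<le> ennreal \<rho>"
      using g0 \<epsilon>\<rho> star_radius_le[of x] by (intro hausdorff1_ray_segment_le) auto
    finally show ?thesis .
  qed
  moreover have "U \<subseteq> annulus (ray g0 \<epsilon>) \<epsilon> (\<epsilon> + \<rho>)"
    unfolding U_def using g0 J \<epsilon>\<rho> by (intro ray_segments_subset_annulus) auto
  ultimately have "a * (\<rho> - \<theta> * \<rho>) / \<rho> \<le> C * (1 + \<theta>)"
    using \<open>open U\<close> \<epsilon>\<rho> \<theta> \<open>C < a\<close> C
    by (intro BG_ratio_le[OF BG C, of "\<epsilon> - \<rho>" \<epsilon> \<epsilon> "\<epsilon> + \<rho>"]) auto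
  moreover have "a * (\<rho> - \<theta> * \<rho>) / \<rho> = a * (1 - \<theta>)"
    using \<epsilon>\<rho> by (simp add: field_simps)
  ultimately show False
    using \<theta>(3) by simp
qed

end

theorem proposition4p4:
  fixes V :: "'a::metric_space set" and E :: "nat set"
    and l :: "nat \<Rightarrow> real" and gamma :: "nat \<Rightarrow> real \<Rightarrow> 'a"
    and k n C :: real and x :: 'a
  assumes "complete (UNIV :: 'a set)"
    and "loc_compact_metric TYPE('a)"
    and "length_space TYPE('a)"
    and "metric_graph V E l gamma"
    and "n \<ge> 1" and "C \<ge> 1"
    and "BG TYPE('a) k n C"
  shows "deg x \<le> ereal (C + 1)"
proof -
  interpret metric_graph_space V E l gamma
    using assms(3,4) by unfold_locales
  have "deg x \<le> ereal (real (card (germs x)))"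
    by (rule deg_le_card_germs)
  also have "\<dots> \<le> ereal (C + 1)"
    using card_germs_le[OF assms(7,5,6)] by simp
  finally show ?thesis .
qed

end
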